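(* Let $\mathcal{X}\subset\mathbb{R}^n$ be open, connected and bounded, let $1\le m<n$, and let $\{(x_i,u_i,\dot{x}_i)\}_{i=1}^{N}\subset \mathcal{X}\times\mathbb{R}^m\times\mathbb{R}^n$ be a training dataset. Let $X_c=\{x_1,\ldots,x_{N_c}\}\subset\mathcal{X}$ be a finite constraint set containing all the training states $x_i$, $i=1,\ldots,N$. Let $K^f$ and $K^B$ be $\mathcal{C}^2$ operator-valued positive definite kernels on $\mathcal{X}\times\mathcal{X}$ with associated $\mathbb{R}^n$-valued RKHSs $\mathcal{H}_K^f$ and $\mathcal{H}_K^B$, and define the finite-dimensional subspaces $$\mathcal{V}_f=\Big\{\sum_{i=1}^{N_c}K^f_{x_i}a_i+\sum_{i=1}^{N_c}\sum_{p=1}^n\partial_pK^f_{x_i}a'_{ip}\ :\ a_i,a'_{ip}\in\mathbb{R}^n\Big\}\subset\mathcal{H}_K^f,$$ $$\mathcal{V}_B=\Big\{\sum_{i=1}^{N_c}K^B_{x_i}c_i+\sum_{i=1}^{N_c}\sum_{p=1}^n\partial_pK^B_{x_i}c'_{ip}\ :\ c_i,c'_{ip}\in\mathbb{R}^n\Big\}\subset\mathcal{H}_K^B.$$ Suppose the kernel $K^B$ is chosen such that every $g\in\mathcal{H}_K^B$ satisfies $g^j(x)=0$ for $j=1,\ldots,n-m$ and all $x$. Fix $\lambda>0$, $\mu_f,\mu_b>0$, and a fixed differentiable symmetric-matrix-valued function $W:\mathcal{X}\to\mathbb{S}_n$. Consider the problem $$\min_{\hat f\in\mathcal{H}_K^f,\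 \hat b_j\in\mathcal{H}_K^B,\ j=1,\ldots,m}\ J_d(\hat f,\hat B)\quad\text{s.t.}\quad \mathcal{F}_\lambda(x_i;\hat f,W)\preceq 0\ \ \forall x_i\in X_c,$$ where $\hat B=(\hat b_1,\ldots,\hat b_m)$, $$J_d(\hat f,\hat B)=\sum_{i=1}^N\big\|\hat f(x_i)+\hat B(x_i)u_i-\dot x_i\big\|^2+\mu_f\|\hat f\|^2_{\mathcal{H}_K^f}+\mu_b\sum_{j=1}^m\|\hat b_j\|^2_{\mathcal{H}_K^B},$$ and $$\mathcal{F}_\lambda(x;\hat f,W)=\hat B_\perp^T\Big(-\partial_{\hat f}W(x)+\tfrac{\partial\hat f(x)}{\partial x}W(x)+\big(\tfrac{\partial\hat f(x)}{\partial x}W(x)\big)^T+2\lambda W(x)\Big)\hat B_\perp,\qquad \hat B_\perp=\begin{bmatrix}I_{n-m}\\ O_{m\times(n-m)}\end{bmatrix}.$$ Suppose the feasible set of this LMI constraint is non-empty, and let $f^*$ and $b_j^*$, $j=1,\ldots,m$, be optimizers of this problem. Then $f^*\in\mathcal{V}_f$ and $b_j^*\in\mathcal{V}_B$ for all $j=1,\ldots,m$.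
   Context: For an operator-valued positive definite kernel $K:\mathcal{X}\times\mathcal{X}\to\mathbb{R}^{n\times n}$ (i.e. $K(x,z)^T=K(z,x)$ and $\sum_{i,j}\langle y_i,K(x_i,x_j)y_j\rangle\ge0$ for all finite families), the RKHS $\mathcal{H}_K$ is the completion of the span of the functions $K_xy:=K(\cdot,x)y$ ($x\in\mathcal{X}$, $y\in\mathbb{R}^n$) under the inner product $\langle K_xy,K_zw\rangle_{\mathcal{H}_K}=\langle y,K(x,z)w\rangle$; it satisfies $\langle f(x),y\rangle=\langle f,K_xy\rangle_{\mathcal{H}_K}$. For $K\in\mathcal{C}^2$, $\partial_jK_xy$ denotes the function $z\mapsto \frac{\partial}{\partial s^j}K(r,s)\big|_{r=z,s=x}\,y$ (elementwise derivative). For a vector field $g$ and matrix function $W$, $\partial_gW(x)$ denotes the matrix whose $(p,q)$ entry is $\langle \nabla w_{pq}(x),g(x)\rangle$, the derivative of $w_{pq}$ along $g$. $\mathbb{S}_n$ is the set of symmetric $n\times n$ real matrices; $\preceq$ is the Loewner order. The matrix $\hat B_\perp$ satisfies $\hat B(x)^T\hat B_\perp=0$ because of the sparsity structure of $\mathcal{H}_K^B$. *)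

theory Defs
  imports "HOL-Analysis.Analysis"
begin

type_synonym 'n kernel = "real^'n \<Rightarrow> real^'n \<Rightarrow> real^'n^'n"

definition pd_kernel :: "(real^'n) set \<Rightarrow> 'n kernel \<Rightarrow> bool" where
  "pd_kernel X K \<longleftrightarrow>
     (\<forall>x\<in>X. \<forall>z\<in>X. transpose (K x z) = K z x) \<and>
     (\<forall>F :: ((real^'n) \<times> (real^'n)) list. set (map fst F) \<subseteq> X \<longrightarrow>
        0 \<le> (\<Sum>(x,y)\<leftarrow>F. \<Sum>(z,w)\<leftarrow>F. y \<bullet> (K x z *v w)))"

definition C2_on :: "('a::real_normed_vector) set \<Rightarrow> ('a \<Rightarrow> 'b::real_normed_vector) \<Rightarrow> bool" where
  "C2_on S F \<longleftrightarrow> (\<exists>D D2.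
      (\<forall>p\<in>S. (F has_derivative blinfun_apply (D p)) (at p)) \<and>
      (\<forall>p\<in>S. (D has_derivative blinfun_apply (D2 p)) (at p)) \<and>
      continuous_on S D2)"

definition C2_kernel :: "(real^'n) set \<Rightarrow> 'n kernel \<Rightarrow> bool" where
  "C2_kernel X K \<longleftrightarrow> C2_on (X \<times> X) (\<lambda>(r,s). K r s)"

definition kfun :: "'n kernel \<Rightarrow> ((real^'n) \<times> (real^'n)) list \<Rightarrow> real^'n \<Rightarrow> real^'n" where
  "kfun K F = (\<lambda>z. \<Sum>(x,y)\<leftarrow>F. K z x *v y)"

definition kip :: "'n kernel \<Rightarrow> ((real^'n) \<times> (real^'n)) list \<Rightarrow> ((real^'n) \<times> (real^'n)) list \<Rightarrow> real" where
  "kip K F G = (\<Sum>(x,y)\<leftarrow>F. \<Sum>(z,w)\<leftarrow>G. y \<bullet> (K x z *v w))"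

definition fam_diff :: "((real^'n) \<times> (real^'n)) list \<Rightarrow> ((real^'n) \<times> (real^'n)) list \<Rightarrow> ((real^'n) \<times> (real^'n)) list" where
  "fam_diff F G = F @ map (\<lambda>(x,y). (x, - y)) G"

text \<open>A sequence of span elements that is Cauchy in the RKHS norm and converges pointwise
  on X to f (completion of the span).\<close>
definition rkhs_approx :: "(real^'n) set \<Rightarrow> 'n kernel \<Rightarrow> (real^'n \<Rightarrow> real^'n)
     \<Rightarrow> (nat \<Rightarrow> ((real^'n) \<times> (real^'n)) list) \<Rightarrow> bool" where
  "rkhs_approx X K f Fs \<longleftrightarrow>
     (\<forall>k. set (map fst (Fs k)) \<subseteq> X) \<and>
     (\<forall>e>0. \<exists>N. \<forall>k\<ge>N. \<forall>l\<ge>N. kip K (fam_diff (Fs k) (Fs l)) (fam_diff (Fs k) (Fs l)) < e) \<and>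
     (\<forall>z\<in>X. (\<lambda>k. kfun K (Fs k) z) \<longlonglongrightarrow> f z)"

definition rkhs :: "(real^'n) set \<Rightarrow> 'n kernel \<Rightarrow> (real^'n \<Rightarrow> real^'n) set" where
  "rkhs X K = {f. \<exists>Fs. rkhs_approx X K f Fs}"

definition rkhs_norm2 :: "(real^'n) set \<Rightarrow> 'n kernel \<Rightarrow> (real^'n \<Rightarrow> real^'n) \<Rightarrow> real" where
  "rkhs_norm2 X K f = (SOME c. \<exists>Fs. rkhs_approx X K f Fs \<and> (\<lambda>k. kip K (Fs k) (Fs k)) \<longlonglongrightarrow> c)"

definition dK :: "'n kernel \<Rightarrow> 'n \<Rightarrow> real^'n \<Rightarrow> real^'n \<Rightarrow> real^'n \<Rightarrow> real^'n" where
  "dK K p x y = (\<lambda>z. frechet_derivative (\<lambda>s. K z s) (at x) (axis p 1) *v y)"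

definition Vspace :: "(real^'n) set \<Rightarrow> 'n kernel \<Rightarrow> (real^'n) set \<Rightarrow> (real^'n \<Rightarrow> real^'n) set" where
  "Vspace X K Xc = {g. \<exists>a a'. \<forall>z\<in>X.
      g z = (\<Sum>x\<in>Xc. K z x *v a x) + (\<Sum>x\<in>Xc. \<Sum>p\<in>UNIV. dK K p x (a' x p) z)}"

definition dir_deriv_mat :: "(real^'n \<Rightarrow> real^'n^'n) \<Rightarrow> (real^'n \<Rightarrow> real^'n) \<Rightarrow> real^'n \<Rightarrow> real^'n^'n" where
  "dir_deriv_mat W g x = frechet_derivative W (at x) (g x)"

definition loewner_le :: "real^'n^'n \<Rightarrow> real^'n^'n \<Rightarrow> bool" where
  "loewner_le A B \<longleftrightarrow> (\<forall>v. 0 \<le> v \<bullet> ((B - A) *v v))"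

text \<open>Index j of the first (n-m) coordinates (w.r.t. the linear order on the index type).\<close>
definition first_coord :: "nat \<Rightarrow> 'n::{finite,linorder} \<Rightarrow> bool" where
  "first_coord k j \<longleftrightarrow> card {i. i < j} < k"

text \<open>B_perp padded with zero columns to an n x n matrix: [I_{n-m} 0; 0 0].\<close>
definition Bperp_pad :: "nat \<Rightarrow> ((real, 'n::{finite,linorder}) vec, 'n) vec" where
  "Bperp_pad k = (\<chi> i j. if i = j \<and> first_coord k i then 1 else 0)"

definition F_lambda :: "nat \<Rightarrow> real \<Rightarrow> (real, 'n::{finite,linorder}) vec \<Rightarrow> ((real, 'n) vec \<Rightarrow> (real, 'n) vec)
     \<Rightarrow> ((real, 'n) vec \<Rightarrow> ((real, 'n) vec, 'n) vec) \<Rightarrow> ((real, 'n) vec, 'n) vec" where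
  "F_lambda k lam x f W =
     transpose (Bperp_pad k) **
       (- dir_deriv_mat W f x + jacobian f (at x) ** W x + transpose (jacobian f (at x) ** W x)
        + (2 * lam) *\<^sub>R W x) ** Bperp_pad k"

definition J_d :: "nat \<Rightarrow> (nat \<Rightarrow> real^'n) \<Rightarrow> (nat \<Rightarrow> real^'m) \<Rightarrow> (nat \<Rightarrow> real^'n)
     \<Rightarrow> real \<Rightarrow> real \<Rightarrow> (real^'n) set \<Rightarrow> 'n kernel \<Rightarrow> 'n kernel
     \<Rightarrow> (real^'n \<Rightarrow> real^'n) \<Rightarrow> ('m::finite \<Rightarrow> real^'n \<Rightarrow> real^'n) \<Rightarrow> real" where
  "J_d N xs us xds muf mub X Kf KB f b =
     (\<Sum>i<N. (norm (f (xs i) + (\<Sum>j\<in>UNIV. (us i $ j) *\<^sub>R b j (xs i)) - xds i))\<^sup>2)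
     + muf * rkhs_norm2 X Kf f + mub * (\<Sum>j\<in>UNIV. rkhs_norm2 X KB (b j))"

end

(*
  The RKHS is realised as the pointwise limits on X of Cauchy sequences in the span of the kernel
  sections K(.,x) y; it carries a semi-inner product with the reproducing property
  <f, K(.,x) y> = f x . y.  Split an optimiser orthogonally as f = g + h, with g in the span of the
  sections K(.,x) e_q and of their partial derivatives d_p K(.,x) e_q at the constraint points x.
  Orthogonality gives h x = 0 there, and also Dh x = 0: as the kernel is C^2, its Gram form on
  weights whose zeroth and first moments about x vanish is of second order, so the difference
  quotients of K(.,s) in s converge in the RKHS and h y = o(|y - x|).  Hence g has the same values
  and derivatives as f at the constraint points, so it is feasible with the same data term, while
  ||f||^2 = ||g||^2 + ||h||^2.  Optimality forces ||h|| = 0, i.e. f = g on X.  The same argument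
  applies to each b_j, which does not enter the constraint at all.
*)

theory Submission
  imports Defs "HOL-Library.Function_Algebras"
begin

instantiation "fun" :: (type, real_vector) real_vector
begin

definition scaleR_fun :: "real \<Rightarrow> ('a \<Rightarrow> 'b) \<Rightarrow> 'a \<Rightarrow> 'b" where
  "scaleR_fun c f = (\<lambda>x. c *\<^sub>R f x)"

instance
  by standard (auto simp: scaleR_fun_def fun_eq_iff scaleR_add_right scaleR_add_left)

end

lemma scaleR_fun_apply [simp]: "(c *\<^sub>R f) x = c *\<^sub>R f x"
  by (simp add: scaleR_fun_def)

lemma sum_fun_apply: "(\<Sum>a\<in>A. (f a :: 'b \<Rightarrow> 'c::comm_monoid_add)) z = (\<Sum>a\<in>A. f a z)"
  by (induction A rule: infinite_finite_induct) auto

section \<open>Semi-inner products\<close>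

lemma discriminant_le_of_nonneg_quadratic:
  fixes a b c :: real
  assumes nonneg: "\<And>t. 0 \<le> a - 2*t*b + t^2*c" and "0 \<le> c"
  shows "b^2 \<le> a*c"
proof (cases "c = 0")
  case True
  have "b = 0"
  proof (rule ccontr)
    assume "b \<noteq> 0"
    have "0 \<le> a - 2*((a+1)/(2*b))*b + ((a+1)/(2*b))^2*c" by (rule nonneg)
    with True \<open>b \<noteq> 0\<close> show False by (simp add: field_simps)
  qed
  with True show ?thesis by simp
next
  case False
  with \<open>0 \<le> c\<close> have "c > 0" by simp
  have "0 \<le> a - 2*(b/c)*b + (b/c)^2*c" by (rule nonneg)
  with \<open>c > 0\<close> show ?thesis by (simp add: field_simps power2_eq_square)
qed

locale semi_inner_space =
  fixes V :: "'a::real_vector set" and ip :: "'a \<Rightarrow> 'a \<Rightarrow> real"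
  assumes subspace: "subspace V"
    and ip_add_left: "x \<in> V \<Longrightarrow> y \<in> V \<Longrightarrow> z \<in> V \<Longrightarrow> ip (x + y) z = ip x z + ip y z"
    and ip_scaleR_left: "x \<in> V \<Longrightarrow> y \<in> V \<Longrightarrow> ip (c *\<^sub>R x) y = c * ip x y"
    and ip_commute: "x \<in> V \<Longrightarrow> y \<in> V \<Longrightarrow> ip x y = ip y x"
    and ip_self_nonneg: "x \<in> V \<Longrightarrow> 0 \<le> ip x x"
begin

lemma mem_zero: "0 \<in> V"
  and mem_add: "x \<in> V \<Longrightarrow> y \<in> V \<Longrightarrow> x + y \<in> V"
  and mem_diff: "x \<in> V \<Longrightarrow> y \<in> V \<Longrightarrow> x - y \<in> V"
  and mem_scaleR: "x \<in> V \<Longrightarrow> c *\<^sub>R x \<in> V"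
  and mem_sum: "(\<And>i. i \<in> I \<Longrightarrow> r i \<in> V) \<Longrightarrow> (\<Sum>i\<in>I. r i) \<in> V"
  using subspace
  by (auto intro: real_vector.subspace_0 real_vector.subspace_add real_vector.subspace_diff
      real_vector.subspace_scale real_vector.subspace_sum)

lemma ip_add_right: "x \<in> V \<Longrightarrow> y \<in> V \<Longrightarrow> z \<in> V \<Longrightarrow> ip z (x + y) = ip z x + ip z y"
  by (metis ip_commute ip_add_left mem_add)

lemma ip_scaleR_right: "x \<in> V \<Longrightarrow> y \<in> V \<Longrightarrow> ip y (c *\<^sub>R x) = c * ip y x"
  by (metis ip_commute ip_scaleR_left mem_scaleR)

lemma ip_diff_left: "x \<in> V \<Longrightarrow> y \<in> V \<Longrightarrow> z \<in> V \<Longrightarrow> ip (x - y) z = ip x z - ip y z"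
  using ip_add_left[of x "(-1) *\<^sub>R y" z] ip_scaleR_left[of y z "-1"] mem_scaleR[of y "-1"]
  by simp

lemma ip_diff_right: "x \<in> V \<Longrightarrow> y \<in> V \<Longrightarrow> z \<in> V \<Longrightarrow> ip z (x - y) = ip z x - ip z y"
  by (metis ip_commute ip_diff_left mem_diff)

lemma ip_sum_right:
  "finite I \<Longrightarrow> (\<And>i. i \<in> I \<Longrightarrow> r i \<in> V) \<Longrightarrow> y \<in> V \<Longrightarrow> ip y (\<Sum>i\<in>I. r i) = (\<Sum>i\<in>I. ip y (r i))"
proof (induction I rule: finite_induct)
  case empty
  then show ?case using ip_scaleR_right[OF mem_zero, of y 0] by simp
qed (simp add: ip_add_right mem_sum)

lemma ip_expand:
  "x \<in> V \<Longrightarrow> y \<in> V \<Longrightarrow> ip (x - t *\<^sub>R y) (x - t *\<^sub>R y) = ip x x - 2*t*ip x y + t^2 * ip y y"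
  by (simp add: ip_diff_left ip_diff_right mem_diff mem_scaleR ip_scaleR_left ip_scaleR_right
      ip_commute[of y x] power2_eq_square algebra_simps)

lemma Cauchy_Schwarz: "x \<in> V \<Longrightarrow> y \<in> V \<Longrightarrow> (ip x y)^2 \<le> ip x x * ip y y"
  by (rule discriminant_le_of_nonneg_quadratic)
    (auto simp: ip_expand[symmetric] ip_self_nonneg mem_diff mem_scaleR)

lemma pythagoras: "x \<in> V \<Longrightarrow> y \<in> V \<Longrightarrow> ip x y = 0 \<Longrightarrow> ip (x + y) (x + y) = ip x x + ip y y"
  by (simp add: ip_add_left ip_add_right mem_add ip_commute[of y x])

definition snorm :: "'a \<Rightarrow> real" where
  "snorm x = sqrt \<bar>ip x x\<bar>"

lemma snorm_nonneg: "0 \<le> snorm x"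
  by (simp add: snorm_def)

lemma snorm_sq: "x \<in> V \<Longrightarrow> (snorm x)^2 = ip x x"
  by (simp add: snorm_def ip_self_nonneg)

lemma abs_ip_le_snorm: "x \<in> V \<Longrightarrow> y \<in> V \<Longrightarrow> \<bar>ip x y\<bar> \<le> snorm x * snorm y"
  by (rule power2_le_imp_le)
    (simp_all add: Cauchy_Schwarz snorm_sq power_mult_distrib snorm_nonneg)

lemma ip_eq_0_if_ip_self_eq_0: "x \<in> V \<Longrightarrow> y \<in> V \<Longrightarrow> ip x x = 0 \<Longrightarrow> ip x y = 0"
  using abs_ip_le_snorm[of x y] by (simp add: snorm_def)

lemma snorm_triangle: "x \<in> V \<Longrightarrow> y \<in> V \<Longrightarrow> snorm (x + y) \<le> snorm x + snorm y"
proof (rule power2_le_imp_le)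
  assume "x \<in> V" "y \<in> V"
  then have "(snorm (x + y))^2 = (snorm x)^2 + 2 * ip x y + (snorm y)^2"
    by (simp add: snorm_sq mem_add ip_add_left ip_add_right ip_commute[of y x])
  also have "\<dots> \<le> (snorm x + snorm y)^2"
    using abs_ip_le_snorm[OF \<open>x \<in> V\<close> \<open>y \<in> V\<close>] by (simp add: power2_sum)
  finally show "(snorm (x + y))^2 \<le> (snorm x + snorm y)^2" .
qed (simp add: snorm_nonneg)

lemma snorm_scaleR: "x \<in> V \<Longrightarrow> snorm (c *\<^sub>R x) = \<bar>c\<bar> * snorm x"
  by (simp add: snorm_def ip_scaleR_left ip_scaleR_right mem_scaleR abs_mult real_sqrt_mult
      flip: power2_eq_square)

lemma tendsto_snorm_zero: "(\<lambda>k. ip (d k) (d k)) \<longlonglongrightarrow> 0 \<Longrightarrow> (\<lambda>k. snorm (d k)) \<longlonglongrightarrow> 0"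
  unfolding snorm_def using tendsto_real_sqrt[OF tendsto_rabs] by fastforce

lemma ip_diff_bound:
  assumes "a \<in> V" "a' \<in> V" "b \<in> V" "b' \<in> V"
  shows "\<bar>ip a b - ip a' b'\<bar> \<le> snorm (a - a') * snorm b + snorm a' * snorm (b - b')"
proof -
  have "ip a b - ip a' b' = ip (a - a') b + ip a' (b - b')"
    using assms by (simp add: ip_diff_left ip_diff_right)
  then show ?thesis
    using abs_ip_le_snorm[of "a - a'" b] abs_ip_le_snorm[of a' "b - b'"] assms
    by (simp add: mem_diff)
qed

definition snorm_Cauchy :: "(nat \<Rightarrow> 'a) \<Rightarrow> bool" where
  "snorm_Cauchy u \<longleftrightarrow> (\<forall>k. u k \<in> V) \<and> (\<forall>e>0. \<exists>N. \<forall>k\<ge>N. \<forall>l\<ge>N. snorm (u k - u l) < e)"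

lemma snorm_less_iff: "x \<in> V \<Longrightarrow> 0 < e \<Longrightarrow> snorm x < e \<longleftrightarrow> ip x x < e^2"
  using real_sqrt_less_iff[of "ip x x" "e^2"] by (simp add: snorm_def ip_self_nonneg)

lemma snorm_Cauchy_iff_ip:
  "snorm_Cauchy u \<longleftrightarrow>
     (\<forall>k. u k \<in> V) \<and> (\<forall>e>0. \<exists>N. \<forall>k\<ge>N. \<forall>l\<ge>N. ip (u k - u l) (u k - u l) < e)"
  (is "_ \<longleftrightarrow> ?V \<and> ?C")
proof (cases ?V)
  case True
  then have less: "snorm (u k - u l) < e \<longleftrightarrow> ip (u k - u l) (u k - u l) < e^2" if "e > 0" for k l e
    using that by (simp add: snorm_less_iff mem_diff)
  have "(\<forall>e>0. \<exists>N. \<forall>k\<ge>N. \<forall>l\<ge>N. snorm (u k - u l) < e) \<longleftrightarrow> ?C"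
  proof
    assume C: "\<forall>e>0. \<exists>N. \<forall>k\<ge>N. \<forall>l\<ge>N. snorm (u k - u l) < e"
    show ?C
    proof (intro allI impI)
      fix e :: real assume "e > 0"
      then obtain N where "\<forall>k\<ge>N. \<forall>l\<ge>N. snorm (u k - u l) < sqrt e"
        using C real_sqrt_gt_zero by blast
      with less[of "sqrt e"] \<open>e > 0\<close> show "\<exists>N. \<forall>k\<ge>N. \<forall>l\<ge>N. ip (u k - u l) (u k - u l) < e" by auto
    qed
  next
    assume C: ?C
    show "\<forall>e>0. \<exists>N. \<forall>k\<ge>N. \<forall>l\<ge>N. snorm (u k - u l) < e"
    proof (intro allI impI)
      fix e :: real assume "e > 0"
      then have "e^2 > 0" by simp
      with C obtain N where "\<forall>k\<ge>N. \<forall>l\<ge>N. ip (u k - u l) (u k - u l) < e^2" by blast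
      with less[of e] \<open>e > 0\<close> show "\<exists>N. \<forall>k\<ge>N. \<forall>l\<ge>N. snorm (u k - u l) < e" by auto
    qed
  qed
  with True show ?thesis by (simp add: snorm_Cauchy_def)
qed (auto simp: snorm_Cauchy_def)

lemma snorm_Cauchy_mem: "snorm_Cauchy u \<Longrightarrow> u k \<in> V"
  by (simp add: snorm_Cauchy_def)

lemma snorm_zero [simp]: "snorm 0 = 0"
  using ip_scaleR_left[OF mem_zero mem_zero, of 0] by (simp add: snorm_def)

lemma snorm_Cauchy_const: "x \<in> V \<Longrightarrow> snorm_Cauchy (\<lambda>k. x)"
  by (simp add: snorm_Cauchy_def)

lemma snorm_Cauchy_add:
  assumes u: "snorm_Cauchy u" and v: "snorm_Cauchy v"
  shows "snorm_Cauchy (\<lambda>k. u k + v k)"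
  unfolding snorm_Cauchy_def
proof (intro conjI allI impI)
  show "u k + v k \<in> V" for k using u v by (simp add: mem_add snorm_Cauchy_mem)
  fix e :: real assume "e > 0"
  then obtain N1 N2 where N1: "\<forall>k\<ge>N1. \<forall>l\<ge>N1. snorm (u k - u l) < e/2"
    and N2: "\<forall>k\<ge>N2. \<forall>l\<ge>N2. snorm (v k - v l) < e/2"
    using u v unfolding snorm_Cauchy_def by (meson half_gt_zero)
  have "snorm (u k + v k - (u l + v l)) < e" if "k \<ge> max N1 N2" "l \<ge> max N1 N2" for k l
  proof -
    have "snorm ((u k - u l) + (v k - v l)) \<le> snorm (u k - u l) + snorm (v k - v l)"
      using u v by (intro snorm_triangle mem_diff snorm_Cauchy_mem)
    moreover have "(u k - u l) + (v k - v l) = u k + v k - (u l + v l)" by simp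
    ultimately have "snorm (u k + v k - (u l + v l)) \<le> snorm (u k - u l) + snorm (v k - v l)"
      by simp
    with that N1 N2 show ?thesis by fastforce
  qed
  then show "\<exists>N. \<forall>k\<ge>N. \<forall>l\<ge>N. snorm (u k + v k - (u l + v l)) < e" by blast
qed

lemma snorm_Cauchy_scaleR:
  assumes u: "snorm_Cauchy u"
  shows "snorm_Cauchy (\<lambda>k. c *\<^sub>R u k)"
  unfolding snorm_Cauchy_def
proof (intro conjI allI impI)
  show "c *\<^sub>R u k \<in> V" for k using u by (simp add: mem_scaleR snorm_Cauchy_mem)
  fix e :: real assume "e > 0"
  then have "e / (\<bar>c\<bar> + 1) > 0" by (simp add: add_nonneg_pos)
  then obtain N where N: "\<forall>k\<ge>N. \<forall>l\<ge>N. snorm (u k - u l) < e / (\<bar>c\<bar> + 1)"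
    using u unfolding snorm_Cauchy_def by blast
  have "snorm (c *\<^sub>R u k - c *\<^sub>R u l) < e" if "k \<ge> N" "l \<ge> N" for k l
  proof -
    have "snorm (c *\<^sub>R u k - c *\<^sub>R u l) = \<bar>c\<bar> * snorm (u k - u l)"
      using u by (simp add: snorm_scaleR mem_diff snorm_Cauchy_mem flip: scaleR_diff_right)
    also have "\<dots> \<le> (\<bar>c\<bar> + 1) * snorm (u k - u l)"
      using snorm_nonneg[of "u k - u l"] by (simp add: distrib_right)
    also have "\<dots> < e"
      using N that by (simp add: pos_less_divide_eq mult.commute add_nonneg_pos)
    finally show ?thesis .
  qed
  then show "\<exists>N. \<forall>k\<ge>N. \<forall>l\<ge>N. snorm (c *\<^sub>R u k - c *\<^sub>R u l) < e" by blast
qed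

lemma snorm_Cauchy_diff: "snorm_Cauchy u \<Longrightarrow> snorm_Cauchy v \<Longrightarrow> snorm_Cauchy (\<lambda>k. u k - v k)"
  using snorm_Cauchy_add[of u "\<lambda>k. (-1) *\<^sub>R v k"] snorm_Cauchy_scaleR[of v "-1"] by simp

lemma snorm_Cauchy_bounded:
  assumes u: "snorm_Cauchy u"
  obtains M where "\<And>k. snorm (u k) \<le> M"
proof -
  obtain N where N: "\<forall>k\<ge>N. \<forall>l\<ge>N. snorm (u k - u l) < 1"
    using u zero_less_one unfolding snorm_Cauchy_def by blast
  define M where "M = Max ((\<lambda>k. snorm (u k)) ` {..N}) + 1"
  have "snorm (u k) \<le> M" for k
  proof (cases "k \<le> N")
    case False
    have "snorm (u k) \<le> snorm (u k - u N) + snorm (u N)"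
      using snorm_triangle[of "u k - u N" "u N"] u by (simp add: mem_diff snorm_Cauchy_mem)
    moreover have "snorm (u N) \<le> Max ((\<lambda>k. snorm (u k)) ` {..N})" by (intro Max_ge) auto
    moreover have "snorm (u k - u N) < 1" using N False by simp
    ultimately show ?thesis unfolding M_def by linarith
  next
    case True
    then have "snorm (u k) \<le> Max ((\<lambda>k. snorm (u k)) ` {..N})" by (intro Max_ge) auto
    then show ?thesis by (simp add: M_def)
  qed
  then show ?thesis by (rule that)
qed

lemma convergent_ip:
  assumes u: "snorm_Cauchy u" and v: "snorm_Cauchy v"
  shows "convergent (\<lambda>k. ip (u k) (v k))"
proof -
  obtain M1 M2 where M1: "\<And>k. snorm (u k) \<le> M1" and M2: "\<And>k. snorm (v k) \<le> M2"
    using snorm_Cauchy_bounded u v by metis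
  have M: "0 \<le> M1" "0 \<le> M2" using M1[of 0] M2[of 0] snorm_nonneg order_trans by blast+
  have "Cauchy (\<lambda>k. ip (u k) (v k))"
  proof (rule CauchyI)
    fix e :: real assume e: "e > 0"
    define d where "d = e / (M1 + M2 + 1)"
    have d: "d > 0" "d * (M1 + M2) < e" using e M by (simp_all add: d_def field_simps)
    obtain N1 N2 where N1: "\<forall>k\<ge>N1. \<forall>l\<ge>N1. snorm (u k - u l) < d"
      and N2: "\<forall>k\<ge>N2. \<forall>l\<ge>N2. snorm (v k - v l) < d"
      using u v d(1) unfolding snorm_Cauchy_def by meson
    have "\<bar>ip (u k) (v k) - ip (u l) (v l)\<bar> < e" if "k \<ge> max N1 N2" "l \<ge> max N1 N2" for k l
    proof -
      have "\<bar>ip (u k) (v k) - ip (u l) (v l)\<bar> \<le> snorm (u k - u l) * snorm (v k) + snorm (u l) * snorm (v k - v l)"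
        using u v by (intro ip_diff_bound) (simp_all add: snorm_Cauchy_mem)
      also have "\<dots> \<le> d * M2 + M1 * d"
        using that N1 N2 M1 M2 M d(1)
        by (intro add_mono mult_mono) (auto simp: snorm_nonneg less_imp_le)
      finally show ?thesis using d(2) by (simp add: algebra_simps)
    qed
    then show "\<exists>N. \<forall>k\<ge>N. \<forall>l\<ge>N. norm (ip (u k) (v k) - ip (u l) (v l)) < e"
      by (intro exI[of _ "max N1 N2"]) auto
  qed
  then show ?thesis by (simp add: Cauchy_convergent_iff)
qed

lemma snorm_Cauchy_ip_self_tendsto_zero:
  assumes d: "snorm_Cauchy d" and lim: "\<And>k. (\<lambda>l. ip (d k) (d l)) \<longlonglongrightarrow> 0"
  shows "(\<lambda>k. ip (d k) (d k)) \<longlonglongrightarrow> 0"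
proof (rule LIMSEQ_I)
  fix e :: real assume e: "e > 0"
  obtain M where M: "\<And>k. snorm (d k) \<le> M" using snorm_Cauchy_bounded[OF d] by blast
  have "0 \<le> M" using M[of 0] snorm_nonneg order_trans by blast
  define e' where "e' = e / (2 * (M + 1))"
  have e': "e' > 0" "M * e' < e"
    using e \<open>0 \<le> M\<close> by (simp_all add: e'_def field_simps add_nonneg_pos)
  obtain N where N: "\<forall>k\<ge>N. \<forall>l\<ge>N. snorm (d k - d l) < e'"
    using d e'(1) unfolding snorm_Cauchy_def by blast
  have le: "ip (d k) (d k) \<le> M * e'" if k: "k \<ge> N" for k
  proof -
    have "(\<lambda>l. M * e' + ip (d k) (d l)) \<longlonglongrightarrow> M * e'"
      using tendsto_add[OF tendsto_const lim[of k]] by simp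
    then show ?thesis
    proof (rule LIMSEQ_le_const, intro exI allI impI)
      fix l assume l: "l \<ge> N"
      have "ip (d k) (d k) = ip (d k) (d k - d l) + ip (d k) (d l)"
        using d by (simp add: ip_diff_right snorm_Cauchy_mem)
      also have "ip (d k) (d k - d l) \<le> snorm (d k) * snorm (d k - d l)"
        using abs_ip_le_snorm[of "d k" "d k - d l"] d by (simp add: mem_diff snorm_Cauchy_mem)
      also have "\<dots> \<le> M * e'"
        using M N k l \<open>0 \<le> M\<close> by (intro mult_mono) (auto simp: snorm_nonneg less_imp_le)
      finally show "ip (d k) (d k) \<le> M * e' + ip (d k) (d l)" by simp
    qed
  qed
  have "norm (ip (d k) (d k) - 0) < e" if "k \<ge> N" for k
    using le[OF that] e'(2) ip_self_nonneg[OF snorm_Cauchy_mem[OF d, of k]] by simp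
  then show "\<exists>N. \<forall>k\<ge>N. norm (ip (d k) (d k) - 0) < e" by blast
qed

lemma orthogonal_to_span:
  assumes "finite I" "\<And>i. i \<in> I \<Longrightarrow> r i \<in> V" "u \<in> V" "\<And>i. i \<in> I \<Longrightarrow> ip u (r i) = 0"
  shows "ip u (\<Sum>j\<in>I. c j *\<^sub>R r j) = 0"
  using assms by (simp add: ip_sum_right mem_scaleR ip_scaleR_right)

lemma orthogonal_projection_exists:
  assumes "finite I" "\<And>i. i \<in> I \<Longrightarrow> r i \<in> V" "f \<in> V"
  shows "\<exists>c. \<forall>i\<in>I. ip (f - (\<Sum>j\<in>I. c j *\<^sub>R r j)) (r i) = 0"
  using assms
proof (induction I arbitrary: f rule: finite_induct)
  case (insert a I)
  have r: "\<And>i. i \<in> I \<Longrightarrow> r i \<in> V" "r a \<in> V" using insert.prems by auto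
  obtain c0 where c0: "\<forall>i\<in>I. ip (f - (\<Sum>j\<in>I. c0 j *\<^sub>R r j)) (r i) = 0"
    using insert.IH r \<open>f \<in> V\<close> by blast
  obtain ca where ca: "\<forall>i\<in>I. ip (r a - (\<Sum>j\<in>I. ca j *\<^sub>R r j)) (r i) = 0"
    using insert.IH r by blast
  \<comment> \<open>Gram--Schmidt: orthogonalise \<open>r a\<close> against \<open>r ` I\<close>, then remove the component along it.\<close>
  define g where "g = f - (\<Sum>j\<in>I. c0 j *\<^sub>R r j)"
  define s where "s = r a - (\<Sum>j\<in>I. ca j *\<^sub>R r j)"
  define \<beta> where "\<beta> = ip g s / ip s s"
  define c where "c = (\<lambda>j. if j = a then \<beta> else c0 j - \<beta> * ca j)"
  have V: "g \<in> V" "s \<in> V" "g - \<beta> *\<^sub>R s \<in> V"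
    using r \<open>f \<in> V\<close> by (auto simp: g_def s_def intro!: mem_diff mem_sum mem_scaleR)
  have "(\<Sum>j\<in>insert a I. c j *\<^sub>R r j) = \<beta> *\<^sub>R r a + (\<Sum>j\<in>I. (c0 j - \<beta> * ca j) *\<^sub>R r j)"
    using insert.hyps by (simp add: c_def) (intro sum.cong, auto)
  then have res: "f - (\<Sum>j\<in>insert a I. c j *\<^sub>R r j) = g - \<beta> *\<^sub>R s"
    by (simp add: g_def s_def scaleR_diff_left sum_subtractf scaleR_sum_right algebra_simps)
  have orth_I: "ip (g - \<beta> *\<^sub>R s) (r i) = 0" if "i \<in> I" for i
  proof -
    have "ip g (r i) = 0" "ip s (r i) = 0" using that c0 ca by (simp_all add: g_def s_def)
    then show ?thesis using that V r by (simp add: ip_diff_left ip_scaleR_left mem_scaleR)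
  qed
  have "ip (g - \<beta> *\<^sub>R s) s = 0"
  proof (cases "ip s s = 0")
    case True
    then show ?thesis
      using V ip_eq_0_if_ip_self_eq_0[of s g] ip_commute[of s g]
      by (simp add: ip_diff_left ip_scaleR_left mem_scaleR)
  qed (use V in \<open>simp add: \<beta>_def ip_diff_left ip_scaleR_left mem_scaleR\<close>)
  moreover have "ip (g - \<beta> *\<^sub>R s) (\<Sum>j\<in>I. ca j *\<^sub>R r j) = 0"
    using orth_I V r insert.hyps by (intro orthogonal_to_span) auto
  ultimately have "ip (g - \<beta> *\<^sub>R s) (r a) = 0"
    using V r by (simp add: s_def ip_diff_right mem_sum mem_scaleR)
  then show ?case using orth_I by (intro exI[of _ c]) (simp add: res)
qed simp

lemma orthogonal_decomposition:
  assumes "finite I" "\<And>i. i \<in> I \<Longrightarrow> r i \<in> V" "f \<in> V"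
  obtains c where "\<forall>i\<in>I. ip (f - (\<Sum>j\<in>I. c j *\<^sub>R r j)) (r i) = 0"
    and "ip f f = ip (\<Sum>j\<in>I. c j *\<^sub>R r j) (\<Sum>j\<in>I. c j *\<^sub>R r j)
          + ip (f - (\<Sum>j\<in>I. c j *\<^sub>R r j)) (f - (\<Sum>j\<in>I. c j *\<^sub>R r j))"
proof -
  obtain c where c: "\<forall>i\<in>I. ip (f - (\<Sum>j\<in>I. c j *\<^sub>R r j)) (r i) = 0"
    using orthogonal_projection_exists[of I r f] assms by blast
  define g where "g = (\<Sum>j\<in>I. c j *\<^sub>R r j)"
  have V: "g \<in> V" "f - g \<in> V" using assms by (auto simp: g_def intro!: mem_diff mem_sum mem_scaleR)
  have "ip (f - g) g = 0"
    unfolding g_def using assms c V by (intro orthogonal_to_span) (auto simp: g_def)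
  then have "ip (g + (f - g)) (g + (f - g)) = ip g g + ip (f - g) (f - g)"
    using V ip_commute[of g "f - g"] by (intro pythagoras) auto
  with c show ?thesis by (intro that) (simp_all add: g_def)
qed

end

section \<open>The RKHS as a completion of the span of kernel sections\<close>

type_synonym 'n kernel_fam = "((real^'n) \<times> (real^'n)) list"

lemma kfun_Nil [simp]: "kfun K [] = 0"
  and kfun_Cons [simp]: "kfun K ((x,y) # F) z = K z x *v y + kfun K F z"
  and kfun_append [simp]: "kfun K (F @ G) = kfun K F + kfun K G"
  by (simp_all add: kfun_def fun_eq_iff)

lemma kip_append_left: "kip K (F @ G) H = kip K F H + kip K G H"
  by (simp add: kip_def)

lemma sum_list_pairs_swap:
  "(\<Sum>(x,y)\<leftarrow>xs. \<Sum>(z,w)\<leftarrow>ys. (f x y z w :: 'a::comm_monoid_add)) = (\<Sum>(z,w)\<leftarrow>ys. \<Sum>(x,y)\<leftarrow>xs. f x y z w)"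
  by (induction xs) (auto simp: split_def sum_list_addf)

definition fam_scaleR :: "real \<Rightarrow> ('n::finite) kernel_fam \<Rightarrow> 'n kernel_fam" where
  "fam_scaleR c F = map (\<lambda>(x,y). (x, c *\<^sub>R y)) F"

lemma kfun_fam_scaleR [simp]: "kfun K (fam_scaleR c F) = c *\<^sub>R kfun K F"
  by (induction F) (auto simp: fam_scaleR_def kfun_def fun_eq_iff scaleR_right_distrib matrix_vector_mult_scaleR)

lemma kip_fam_scaleR_left: "kip K (fam_scaleR c F) G = c * kip K F G"
  by (induction F)
    (auto simp: fam_scaleR_def kip_def sum_list_const_mult[symmetric] algebra_simps
      intro!: arg_cong[where f=sum_list])

lemma fam_diff_eq: "fam_diff F G = F @ fam_scaleR (-1) G"
  by (simp add: fam_diff_def fam_scaleR_def)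

lemma kfun_fam_diff [simp]: "kfun K (fam_diff F G) = kfun K F - kfun K G"
  by (simp add: fam_diff_eq)

lemma tendsto_sum_list_inner:
  assumes "\<And>z w. (z,w) \<in> set G \<Longrightarrow> (\<lambda>l. g l z) \<longlonglongrightarrow> h z"
  shows "(\<lambda>l. \<Sum>(z,w)\<leftarrow>G. g l z \<bullet> w) \<longlonglongrightarrow> (\<Sum>(z,w)\<leftarrow>G. h z \<bullet> w)"
  using assms
proof (induction G)
  case (Cons a G)
  obtain z w where "a = (z,w)" by force
  with Cons show ?case by (auto intro!: tendsto_add tendsto_inner[OF _ tendsto_const])
qed simp

locale pd_kernel_space =
  fixes X :: "(real^'n) set" and K :: "'n kernel"
  assumes pd: "pd_kernel X K"
begin

definition on_X :: "'n kernel_fam \<Rightarrow> bool" where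
  "on_X F \<longleftrightarrow> set (map fst F) \<subseteq> X"

lemma on_X_simps [simp]:
  "on_X []" "on_X ((x,y) # F) \<longleftrightarrow> x \<in> X \<and> on_X F" "on_X (F @ G) \<longleftrightarrow> on_X F \<and> on_X G"
  "on_X (fam_scaleR c F) \<longleftrightarrow> on_X F" "on_X (fam_diff F G) \<longleftrightarrow> on_X F \<and> on_X G"
  by (auto simp: on_X_def fam_scaleR_def fam_diff_def image_iff)

lemma kernel_transpose: "x \<in> X \<Longrightarrow> z \<in> X \<Longrightarrow> transpose (K x z) = K z x"
  using pd by (simp add: pd_kernel_def)

lemma kernel_inner_commute: "x \<in> X \<Longrightarrow> z \<in> X \<Longrightarrow> (K z x *v y) \<bullet> w = y \<bullet> (K x z *v w)"
  by (metis kernel_transpose dot_lmul_matrix vector_transpose_matrix)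

lemma kip_eq_sum_kfun: "on_X F \<Longrightarrow> on_X G \<Longrightarrow> kip K F G = (\<Sum>(z,w)\<leftarrow>G. kfun K F z \<bullet> w)"
proof (induction F)
  case Nil
  then show ?case by (induction G) (auto simp: kip_def)
next
  case (Cons a F)
  obtain x y where a: "a = (x,y)" by force
  have "(\<Sum>(z,w)\<leftarrow>G. y \<bullet> (K x z *v w)) + (\<Sum>(z,w)\<leftarrow>G. kfun K F z \<bullet> w)
      = (\<Sum>(z,w)\<leftarrow>G. kfun K ((x,y) # F) z \<bullet> w)" using Cons.prems unfolding a
  proof (induction G)
    case (Cons b G)
    then show ?case by (cases b) (auto simp: kernel_inner_commute inner_add_left)
  qed simp
  then show ?case using Cons by (simp add: a kip_def)
qed

lemma kip_commute: "on_X F \<Longrightarrow> on_X G \<Longrightarrow> kip K F G = kip K G F"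
proof -
  assume F: "on_X F" and G: "on_X G"
  have "kip K F G = (\<Sum>(x,y)\<leftarrow>F. \<Sum>(z,w)\<leftarrow>G. w \<bullet> (K z x *v y))"
    unfolding kip_def
  proof (intro arg_cong[where f=sum_list] map_cong refl, clarify)
    fix x y assume "(x,y) \<in> set F"
    then have "x \<in> X" using F by (force simp: on_X_def)
    show "(\<Sum>(z,w)\<leftarrow>G. y \<bullet> (K x z *v w)) = (\<Sum>(z,w)\<leftarrow>G. w \<bullet> (K z x *v y))"
    proof (intro arg_cong[where f=sum_list] map_cong refl, clarify)
      fix z w assume "(z,w) \<in> set G"
      then have "z \<in> X" using G by (force simp: on_X_def)
      with \<open>x \<in> X\<close> show "y \<bullet> (K x z *v w) = w \<bullet> (K z x *v y)"
        using kernel_inner_commute[of x z y w] inner_commute[of w "K z x *v y"] by simp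
    qed
  qed
  also have "\<dots> = kip K G F"
    unfolding kip_def by (rule sum_list_pairs_swap)
  finally show ?thesis .
qed

lemma kip_self_nonneg: "on_X F \<Longrightarrow> 0 \<le> kip K F F"
  using pd by (auto simp: pd_kernel_def kip_def on_X_def)

lemma kip_cong_left: "on_X F \<Longrightarrow> on_X F' \<Longrightarrow> on_X G \<Longrightarrow> kfun K F = kfun K F' \<Longrightarrow> kip K F G = kip K F' G"
  by (simp add: kip_eq_sum_kfun)

definition kspan :: "(real^'n \<Rightarrow> real^'n) set" where
  "kspan = {kfun K F | F. on_X F}"

definition kspan_rep :: "(real^'n \<Rightarrow> real^'n) \<Rightarrow> 'n kernel_fam" where
  "kspan_rep u = (SOME F. on_X F \<and> u = kfun K F)"

text \<open>Independent of the chosen representatives, see \<open>kspan_ip_kfun\<close>.\<close>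

definition kspan_ip :: "(real^'n \<Rightarrow> real^'n) \<Rightarrow> (real^'n \<Rightarrow> real^'n) \<Rightarrow> real" where
  "kspan_ip u v = kip K (kspan_rep u) (kspan_rep v)"

lemma kfun_in_kspan: "on_X F \<Longrightarrow> kfun K F \<in> kspan"
  by (auto simp: kspan_def)

lemma kspan_E:
  assumes "u \<in> kspan"
  obtains F where "on_X F" "u = kfun K F"
  using assms by (auto simp: kspan_def)

lemma kspan_rep: "u \<in> kspan \<Longrightarrow> on_X (kspan_rep u) \<and> u = kfun K (kspan_rep u)"
  unfolding kspan_rep_def by (rule someI_ex) (auto simp: kspan_def)

lemma kspan_ip_kfun: "on_X F \<Longrightarrow> on_X G \<Longrightarrow> kspan_ip (kfun K F) (kfun K G) = kip K F G"
proof -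
  assume F: "on_X F" and G: "on_X G"
  define F' G' where "F' = kspan_rep (kfun K F)" and "G' = kspan_rep (kfun K G)"
  have F': "on_X F'" "kfun K F = kfun K F'" and G': "on_X G'" "kfun K G = kfun K G'"
    using kspan_rep[OF kfun_in_kspan[OF F]] kspan_rep[OF kfun_in_kspan[OF G]] by (auto simp: F'_def G'_def)
  have "kspan_ip (kfun K F) (kfun K G) = kip K F' G'" by (simp add: kspan_ip_def F'_def G'_def)
  also have "\<dots> = kip K F G'" using F F' G' by (intro kip_cong_left) auto
  also have "\<dots> = kip K G' F" by (rule kip_commute[OF F G'(1)])
  also have "\<dots> = kip K G F" using F G G' by (intro kip_cong_left) auto
  also have "\<dots> = kip K F G" by (rule kip_commute[OF G F])
  finally show ?thesis .
qed

lemma kspan_ip_kfun_right: "u \<in> kspan \<Longrightarrow> on_X G \<Longrightarrow> kspan_ip u (kfun K G) = (\<Sum>(z,w)\<leftarrow>G. u z \<bullet> w)"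
  by (elim kspan_E) (simp add: kspan_ip_kfun kip_eq_sum_kfun)

sublocale S: semi_inner_space kspan kspan_ip
proof
  show "subspace kspan"
    unfolding real_vector.subspace_def
  proof (intro conjI ballI allI)
    show "0 \<in> kspan" using kfun_in_kspan[of "[]"] by simp
    show "x + y \<in> kspan" if "x \<in> kspan" "y \<in> kspan" for x y
      using that by (elim kspan_E) (metis kfun_append kfun_in_kspan on_X_simps(3))
    show "c *\<^sub>R x \<in> kspan" if "x \<in> kspan" for x c
      using that by (elim kspan_E) (metis kfun_fam_scaleR kfun_in_kspan on_X_simps(4))
  qed
next
  fix x y z assume "x \<in> kspan" "y \<in> kspan" "z \<in> kspan"
  then show "kspan_ip (x + y) z = kspan_ip x z + kspan_ip y z"
    by (elim kspan_E) (simp add: kspan_ip_kfun kip_append_left flip: kfun_append)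
next
  fix x y c assume "x \<in> kspan" "y \<in> kspan"
  then show "kspan_ip (c *\<^sub>R x) y = c * kspan_ip x y"
    by (elim kspan_E) (simp add: kspan_ip_kfun kip_fam_scaleR_left flip: kfun_fam_scaleR)
next
  fix x y assume "x \<in> kspan" "y \<in> kspan"
  then show "kspan_ip x y = kspan_ip y x"
    by (elim kspan_E) (simp add: kspan_ip_kfun kip_commute)
next
  fix x assume "x \<in> kspan"
  then show "0 \<le> kspan_ip x x"
    by (elim kspan_E) (simp add: kspan_ip_kfun kip_self_nonneg)
qed

definition approximates :: "(real^'n \<Rightarrow> real^'n) \<Rightarrow> (nat \<Rightarrow> real^'n \<Rightarrow> real^'n) \<Rightarrow> bool" where
  "approximates f u \<longleftrightarrow> S.snorm_Cauchy u \<and> (\<forall>z\<in>X. (\<lambda>k. u k z) \<longlonglongrightarrow> f z)"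

lemma approximates_in_kspan: "approximates f u \<Longrightarrow> u k \<in> kspan"
  by (simp add: approximates_def S.snorm_Cauchy_mem)

lemma rkhs_approx_iff:
  "rkhs_approx X K f Fs \<longleftrightarrow> (\<forall>k. on_X (Fs k)) \<and> approximates f (\<lambda>k. kfun K (Fs k))"
proof -
  have "kip K (fam_diff (Fs k) (Fs l)) (fam_diff (Fs k) (Fs l))
      = kspan_ip (kfun K (Fs k) - kfun K (Fs l)) (kfun K (Fs k) - kfun K (Fs l))"
    if "\<forall>k. on_X (Fs k)" for k l
    using that by (simp add: kspan_ip_kfun flip: kfun_fam_diff)
  then show ?thesis
    by (auto simp: rkhs_approx_def approximates_def S.snorm_Cauchy_iff_ip on_X_def kfun_in_kspan)
qed

lemma rkhs_iff_approximates: "f \<in> rkhs X K \<longleftrightarrow> (\<exists>u. approximates f u)"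
proof
  assume "\<exists>u. approximates f u"
  then obtain u where u: "approximates f u" by blast
  have "u = (\<lambda>k. kfun K (kspan_rep (u k)))" "\<forall>k. on_X (kspan_rep (u k))"
    using kspan_rep[OF approximates_in_kspan[OF u]] by auto
  then show "f \<in> rkhs X K"
    using u rkhs_approx_iff[of f "\<lambda>k. kspan_rep (u k)"] by (auto simp: rkhs_def)
qed (auto simp: rkhs_def rkhs_approx_iff)

lemma approximates_diff_tendsto_zero:
  assumes u: "approximates f u" and u': "approximates f u'"
  shows "(\<lambda>k. kspan_ip (u k - u' k) (u k - u' k)) \<longlonglongrightarrow> 0"
proof (rule S.snorm_Cauchy_ip_self_tendsto_zero)
  define d where "d = (\<lambda>k. u k - u' k)"
  show d: "S.snorm_Cauchy d"
    using u u' unfolding d_def approximates_def by (intro S.snorm_Cauchy_diff) auto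
  fix k
  have d_kspan: "d l \<in> kspan" for l using d by (rule S.snorm_Cauchy_mem)
  obtain G where G: "on_X G" "d k = kfun K G" using d_kspan[of k] by (rule kspan_E)
  have "kspan_ip (d k) (d l) = (\<Sum>(z,w)\<leftarrow>G. d l z \<bullet> w)" for l
    using G d_kspan[of l] d_kspan[of k] S.ip_commute[of "d k" "d l"] kspan_ip_kfun_right[of "d l" G]
    by simp
  moreover have "(\<lambda>l. \<Sum>(z,w)\<leftarrow>G. d l z \<bullet> w) \<longlonglongrightarrow> (\<Sum>(z,w)\<leftarrow>G. (0::real^'n) \<bullet> w)"
  proof (rule tendsto_sum_list_inner)
    fix z w assume "(z,w) \<in> set G"
    then have "z \<in> X" using G by (force simp: on_X_def)
    then have "(\<lambda>l. u l z - u' l z) \<longlonglongrightarrow> f z - f z"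
      using u u' by (intro tendsto_diff) (auto simp: approximates_def)
    then show "(\<lambda>l. d l z) \<longlonglongrightarrow> 0" by (simp add: d_def)
  qed
  ultimately show "(\<lambda>l. kspan_ip (d k) (d l)) \<longlonglongrightarrow> 0" by (simp add: split_def)
qed

definition approx_seq :: "(real^'n \<Rightarrow> real^'n) \<Rightarrow> nat \<Rightarrow> real^'n \<Rightarrow> real^'n" where
  "approx_seq f = (SOME u. approximates f u)"

text \<open>The limit exists and is the same along all approximating sequences, see \<open>rkhs_ip_tendsto\<close>.\<close>

definition rkhs_ip :: "(real^'n \<Rightarrow> real^'n) \<Rightarrow> (real^'n \<Rightarrow> real^'n) \<Rightarrow> real" where
  "rkhs_ip f g = lim (\<lambda>k. kspan_ip (approx_seq f k) (approx_seq g k))"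

lemma approximates_approx_seq: "f \<in> rkhs X K \<Longrightarrow> approximates f (approx_seq f)"
  unfolding approx_seq_def rkhs_iff_approximates by (erule someI_ex)

lemma rkhs_ip_tendsto:
  assumes u: "approximates f u" and v: "approximates g v"
  shows "(\<lambda>k. kspan_ip (u k) (v k)) \<longlonglongrightarrow> rkhs_ip f g"
proof -
  define u' v' where "u' = approx_seq f" and "v' = approx_seq g"
  have u': "approximates f u'" and v': "approximates g v'"
    unfolding u'_def v'_def using u v by (meson approximates_approx_seq rkhs_iff_approximates)+
  note in_kspan = approximates_in_kspan[OF u] approximates_in_kspan[OF u']
    approximates_in_kspan[OF v] approximates_in_kspan[OF v']
  have lim: "(\<lambda>k. kspan_ip (u' k) (v' k)) \<longlonglongrightarrow> rkhs_ip f g"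
    using S.convergent_ip u' v'
    by (simp add: convergent_LIMSEQ_iff rkhs_ip_def u'_def v'_def approximates_def)
  obtain M1 M2 where M1: "\<And>k. S.snorm (u' k) \<le> M1" and M2: "\<And>k. S.snorm (v k) \<le> M2"
    using S.snorm_Cauchy_bounded u' v by (metis approximates_def)
  have diff: "(\<lambda>k. kspan_ip (u k) (v k) - kspan_ip (u' k) (v' k)) \<longlonglongrightarrow> 0"
  proof (rule Lim_null_comparison)
    have "(\<lambda>k. S.snorm (u k - u' k)) \<longlonglongrightarrow> 0" "(\<lambda>k. S.snorm (v k - v' k)) \<longlonglongrightarrow> 0"
      using approximates_diff_tendsto_zero u u' v v' by (auto intro: S.tendsto_snorm_zero)
    then show "(\<lambda>k. S.snorm (u k - u' k) * M2 + M1 * S.snorm (v k - v' k)) \<longlonglongrightarrow> 0"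
      by (auto intro: tendsto_add_zero tendsto_mult_left_zero tendsto_mult_right_zero)
    show "\<forall>\<^sub>F k in sequentially.
        norm (kspan_ip (u k) (v k) - kspan_ip (u' k) (v' k)) \<le> S.snorm (u k - u' k) * M2 + M1 * S.snorm (v k - v' k)"
    proof (intro always_eventually allI)
      fix k
      have "\<bar>kspan_ip (u k) (v k) - kspan_ip (u' k) (v' k)\<bar>
          \<le> S.snorm (u k - u' k) * S.snorm (v k) + S.snorm (u' k) * S.snorm (v k - v' k)"
        using in_kspan by (intro S.ip_diff_bound)
      also have "\<dots> \<le> S.snorm (u k - u' k) * M2 + M1 * S.snorm (v k - v' k)"
        using M1 M2 S.snorm_nonneg[of "u' 0"] order_trans[OF S.snorm_nonneg M1]
        by (intro add_mono mult_mono) (auto simp: S.snorm_nonneg)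
      finally show "norm (kspan_ip (u k) (v k) - kspan_ip (u' k) (v' k))
          \<le> S.snorm (u k - u' k) * M2 + M1 * S.snorm (v k - v' k)" by simp
    qed
  qed
  show ?thesis using tendsto_add[OF lim diff] by simp
qed

lemma approximates_add: "approximates f u \<Longrightarrow> approximates g v \<Longrightarrow> approximates (f + g) (\<lambda>k. u k + v k)"
  unfolding approximates_def by (auto intro: S.snorm_Cauchy_add tendsto_add)

lemma approximates_scaleR: "approximates f u \<Longrightarrow> approximates (c *\<^sub>R f) (\<lambda>k. c *\<^sub>R u k)"
  unfolding approximates_def by (auto intro: S.snorm_Cauchy_scaleR tendsto_scaleR)

lemma approximates_const: "a \<in> kspan \<Longrightarrow> approximates a (\<lambda>k. a)"
  unfolding approximates_def by (auto intro: S.snorm_Cauchy_const)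

lemma approximates_cong: "(\<And>z. z \<in> X \<Longrightarrow> g z = g' z) \<Longrightarrow> approximates g u \<longleftrightarrow> approximates g' u"
  unfolding approximates_def by auto

lemma kspan_subset_rkhs: "a \<in> kspan \<Longrightarrow> a \<in> rkhs X K"
  using approximates_const rkhs_iff_approximates by blast

lemma kfun_in_rkhs: "on_X F \<Longrightarrow> kfun K F \<in> rkhs X K"
  by (rule kspan_subset_rkhs[OF kfun_in_kspan])

lemma rkhs_ip_kfun: "on_X F \<Longrightarrow> on_X G \<Longrightarrow> rkhs_ip (kfun K F) (kfun K G) = kip K F G"
  using rkhs_ip_tendsto[OF approximates_const approximates_const, of "kfun K F" "kfun K G"]
  by (simp add: LIMSEQ_const_iff kfun_in_kspan kspan_ip_kfun)

lemma rkhs_subspace: "subspace (rkhs X K)"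
  unfolding real_vector.subspace_def
proof (intro conjI ballI allI)
  show "0 \<in> rkhs X K" using approximates_const[OF S.mem_zero] rkhs_iff_approximates by blast
  fix f g c assume f: "f \<in> rkhs X K" and g: "g \<in> rkhs X K"
  show "f + g \<in> rkhs X K"
    using approximates_add[OF approximates_approx_seq[OF f] approximates_approx_seq[OF g]]
    by (auto simp: rkhs_iff_approximates)
  show "c *\<^sub>R f \<in> rkhs X K"
    using approximates_scaleR[OF approximates_approx_seq[OF f]] by (auto simp: rkhs_iff_approximates)
qed

lemma rkhs_ip_eqI:
  "approximates f u \<Longrightarrow> approximates g v \<Longrightarrow> (\<lambda>k. kspan_ip (u k) (v k)) \<longlonglongrightarrow> c \<Longrightarrow> rkhs_ip f g = c"
  using rkhs_ip_tendsto LIMSEQ_unique by blast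

sublocale H: semi_inner_space "rkhs X K" rkhs_ip
proof (rule semi_inner_space.intro[OF rkhs_subspace])
  fix f g h assume "f \<in> rkhs X K" "g \<in> rkhs X K" "h \<in> rkhs X K"
  then have a: "approximates f (approx_seq f)" "approximates g (approx_seq g)" "approximates h (approx_seq h)"
    by (simp_all add: approximates_approx_seq)
  show "rkhs_ip (f + g) h = rkhs_ip f h + rkhs_ip g h"
    using tendsto_add[OF rkhs_ip_tendsto[OF a(1,3)] rkhs_ip_tendsto[OF a(2,3)]]
    by (intro rkhs_ip_eqI[OF approximates_add[OF a(1,2)] a(3)]) (simp add: S.ip_add_left a[THEN approximates_in_kspan])
next
  fix f g c assume "f \<in> rkhs X K" "g \<in> rkhs X K"
  then have a: "approximates f (approx_seq f)" "approximates g (approx_seq g)"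
    by (simp_all add: approximates_approx_seq)
  show "rkhs_ip (c *\<^sub>R f) g = c * rkhs_ip f g"
    using tendsto_mult_left[OF rkhs_ip_tendsto[OF a(1,2)], of c]
    by (intro rkhs_ip_eqI[OF approximates_scaleR[OF a(1)] a(2)]) (simp add: S.ip_scaleR_left a[THEN approximates_in_kspan])
next
  fix f g assume "f \<in> rkhs X K" "g \<in> rkhs X K"
  then have a: "approximates f (approx_seq f)" "approximates g (approx_seq g)"
    by (simp_all add: approximates_approx_seq)
  show "rkhs_ip f g = rkhs_ip g f"
    using rkhs_ip_tendsto[OF a(2,1)]
    by (intro rkhs_ip_eqI[OF a(1,2)]) (simp add: S.ip_commute a[THEN approximates_in_kspan])
next
  fix f assume "f \<in> rkhs X K"
  then have a: "approximates f (approx_seq f)" by (rule approximates_approx_seq)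
  show "0 \<le> rkhs_ip f f"
    using approximates_in_kspan[OF a]
    by (intro LIMSEQ_le_const[OF rkhs_ip_tendsto[OF a a]]) (auto intro: S.ip_self_nonneg)
qed

lemma rkhs_ip_kfun_right:
  assumes f: "f \<in> rkhs X K" and G: "on_X G"
  shows "rkhs_ip f (kfun K G) = (\<Sum>(z,w)\<leftarrow>G. f z \<bullet> w)"
proof -
  note a = approximates_approx_seq[OF f]
  have "(\<lambda>k. kspan_ip (approx_seq f k) (kfun K G)) \<longlonglongrightarrow> rkhs_ip f (kfun K G)"
    by (rule rkhs_ip_tendsto[OF a approximates_const[OF kfun_in_kspan[OF G]]])
  moreover have "(\<lambda>k. kspan_ip (approx_seq f k) (kfun K G)) \<longlonglongrightarrow> (\<Sum>(z,w)\<leftarrow>G. f z \<bullet> w)"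
  proof (subst kspan_ip_kfun_right[OF approximates_in_kspan[OF a] G], rule tendsto_sum_list_inner)
    fix z w assume "(z,w) \<in> set G"
    then have "z \<in> X" using G by (force simp: on_X_def)
    then show "(\<lambda>k. approx_seq f k z) \<longlonglongrightarrow> f z" using a by (simp add: approximates_def)
  qed
  ultimately show ?thesis by (rule LIMSEQ_unique)
qed

lemma rkhs_reproducing: "f \<in> rkhs X K \<Longrightarrow> z \<in> X \<Longrightarrow> rkhs_ip f (kfun K [(z,w)]) = f z \<bullet> w"
  by (simp add: rkhs_ip_kfun_right)

lemma rkhs_cong: "(\<And>z. z \<in> X \<Longrightarrow> g z = g' z) \<Longrightarrow> g \<in> rkhs X K \<longleftrightarrow> g' \<in> rkhs X K"
  unfolding rkhs_iff_approximates using approximates_cong by blast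

lemma rkhs_ip_cong_right:
  assumes "f \<in> rkhs X K" "g \<in> rkhs X K" "\<And>z. z \<in> X \<Longrightarrow> g z = g' z"
  shows "rkhs_ip f g = rkhs_ip f g'"
proof -
  have "approximates g' (approx_seq g)"
    using approximates_approx_seq[OF assms(2)] approximates_cong[of g g'] assms(3) by blast
  then show ?thesis
    using rkhs_ip_eqI[OF approximates_approx_seq[OF assms(1)]]
      rkhs_ip_tendsto[OF approximates_approx_seq[OF assms(1)] approximates_approx_seq[OF assms(2)]]
    by metis
qed

lemma rkhs_norm2_eq: "f \<in> rkhs X K \<Longrightarrow> rkhs_norm2 X K f = rkhs_ip f f"
proof -
  assume f: "f \<in> rkhs X K"
  have lim: "(\<lambda>k. kip K (Fs k) (Fs k)) \<longlonglongrightarrow> rkhs_ip f f" if "rkhs_approx X K f Fs" for Fs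
  proof -
    from that have "\<forall>k. on_X (Fs k)" "approximates f (\<lambda>k. kfun K (Fs k))"
      by (simp_all add: rkhs_approx_iff)
    with rkhs_ip_tendsto[of f "\<lambda>k. kfun K (Fs k)" f "\<lambda>k. kfun K (Fs k)"] show ?thesis
      by (simp add: kspan_ip_kfun)
  qed
  obtain Fs where "rkhs_approx X K f Fs" using f by (auto simp: rkhs_def)
  with lim have "\<exists>c Fs. rkhs_approx X K f Fs \<and> (\<lambda>k. kip K (Fs k) (Fs k)) \<longlonglongrightarrow> c" by blast
  from someI_ex[OF this] obtain Gs where "rkhs_approx X K f Gs"
    and "(\<lambda>k. kip K (Gs k) (Gs k)) \<longlonglongrightarrow> rkhs_norm2 X K f"
    unfolding rkhs_norm2_def by blast
  with lim show ?thesis using LIMSEQ_unique by blast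
qed

lemma rkhs_ip_tendsto_approximates:
  assumes v: "approximates g v" and f: "f \<in> rkhs X K"
  shows "(\<lambda>k. rkhs_ip f (v k)) \<longlonglongrightarrow> rkhs_ip f g"
proof -
  have v_rkhs: "v k \<in> rkhs X K" for k using v by (intro kspan_subset_rkhs approximates_in_kspan)
  have g: "g \<in> rkhs X K" using v rkhs_iff_approximates by blast
  have null: "(\<lambda>k. rkhs_ip (g - v k) (g - v k)) \<longlonglongrightarrow> 0"
  proof (rule LIMSEQ_I)
    fix e :: real assume "e > 0"
    then obtain N where N: "\<forall>k\<ge>N. \<forall>l\<ge>N. kspan_ip (v k - v l) (v k - v l) < e/2"
      using v unfolding approximates_def S.snorm_Cauchy_iff_ip by (meson half_gt_zero)
    have "norm (rkhs_ip (g - v k) (g - v k) - 0) < e" if k: "k \<ge> N" for k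
    proof -
      have "approximates (g + (-1) *\<^sub>R v k) (\<lambda>l. v l + (-1) *\<^sub>R v k)"
        by (rule approximates_add[OF v approximates_scaleR[OF approximates_const[OF approximates_in_kspan[OF v]]]])
      then have "approximates (g - v k) (\<lambda>l. v l - v k)" by simp
      then have "(\<lambda>l. kspan_ip (v l - v k) (v l - v k)) \<longlonglongrightarrow> rkhs_ip (g - v k) (g - v k)"
        using rkhs_ip_tendsto by fastforce
      then have "rkhs_ip (g - v k) (g - v k) \<le> e/2"
        using N k by (intro LIMSEQ_le_const2) (auto intro: less_imp_le)
      moreover have "0 \<le> rkhs_ip (g - v k) (g - v k)"
        using g v_rkhs by (intro H.ip_self_nonneg H.mem_diff)
      ultimately show ?thesis using \<open>e > 0\<close> by simp
    qed
    then show "\<exists>N. \<forall>k\<ge>N. norm (rkhs_ip (g - v k) (g - v k) - 0) < e" by blast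
  qed
  have "(\<lambda>k. rkhs_ip f (g - v k)) \<longlonglongrightarrow> 0"
  proof (rule Lim_null_comparison)
    show "\<forall>\<^sub>F k in sequentially. norm (rkhs_ip f (g - v k)) \<le> H.snorm f * H.snorm (g - v k)"
      using H.abs_ip_le_snorm[OF f H.mem_diff[OF g v_rkhs]] by (intro always_eventually allI) simp
    show "(\<lambda>k. H.snorm f * H.snorm (g - v k)) \<longlonglongrightarrow> 0"
      by (intro tendsto_mult_right_zero H.tendsto_snorm_zero null)
  qed
  then have "(\<lambda>k. rkhs_ip f g - rkhs_ip f (g - v k)) \<longlonglongrightarrow> rkhs_ip f g"
    using tendsto_diff[OF tendsto_const] by fastforce
  moreover have "rkhs_ip f g - rkhs_ip f (g - v k) = rkhs_ip f (v k)" for k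
    using f g v_rkhs by (simp add: H.ip_diff_right)
  ultimately show ?thesis by simp
qed

lemma rkhs_eq_zero_if_ip_self_eq_zero:
  assumes f: "f \<in> rkhs X K" and "rkhs_ip f f = 0" and z: "z \<in> X"
  shows "f z = 0"
proof -
  have "rkhs_ip f (kfun K [(z, f z)]) = 0"
    using H.ip_eq_0_if_ip_self_eq_0[OF f kfun_in_rkhs[of "[(z, f z)]"]] assms by simp
  then show ?thesis using rkhs_reproducing[OF f z] by simp
qed

lemma rkhs_min_norm_in_span:
  assumes I: "finite I" and r: "\<And>i. i \<in> I \<Longrightarrow> r i \<in> rkhs X K" and f: "f \<in> rkhs X K"
    and min: "\<And>g. g \<in> rkhs X K \<Longrightarrow> \<forall>i\<in>I. rkhs_ip (f - g) (r i) = 0 \<Longrightarrow> rkhs_ip f f \<le> rkhs_ip g g"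
  obtains c where "\<And>z. z \<in> X \<Longrightarrow> f z = (\<Sum>j\<in>I. c j *\<^sub>R r j z)"
proof -
  obtain c where orth: "\<forall>i\<in>I. rkhs_ip (f - (\<Sum>j\<in>I. c j *\<^sub>R r j)) (r i) = 0"
    and pyth: "rkhs_ip f f = rkhs_ip (\<Sum>j\<in>I. c j *\<^sub>R r j) (\<Sum>j\<in>I. c j *\<^sub>R r j)
          + rkhs_ip (f - (\<Sum>j\<in>I. c j *\<^sub>R r j)) (f - (\<Sum>j\<in>I. c j *\<^sub>R r j))"
    using H.orthogonal_decomposition[of I r f, OF I r f] by blast
  define g where "g = (\<Sum>j\<in>I. c j *\<^sub>R r j)"
  have g: "g \<in> rkhs X K" using r by (auto simp: g_def intro!: H.mem_sum H.mem_scaleR)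
  have "rkhs_ip f f \<le> rkhs_ip g g" using min[OF g] orth by (simp add: g_def)
  with pyth H.ip_self_nonneg[OF H.mem_diff[OF f g]] have "rkhs_ip (f - g) (f - g) = 0"
    by (simp add: g_def)
  then have "f z = g z" if "z \<in> X" for z
    using rkhs_eq_zero_if_ip_self_eq_zero[OF H.mem_diff[OF f g] _ that] by simp
  then show ?thesis by (intro that) (simp add: g_def sum_fun_apply)
qed

end

section \<open>Derivatives of RKHS functions for \<open>C\<^sup>2\<close> kernels\<close>

lemma tendsto_difference_quotient:
  assumes f: "(f has_derivative f') (at x)" and t: "t \<longlonglongrightarrow> 0" and t_nz: "\<And>k. t k \<noteq> 0"
  shows "(\<lambda>k. (1 / t k) *\<^sub>R (f (x + t k *\<^sub>R v) - f x)) \<longlonglongrightarrow> f' v"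
proof -
  have lin: "f' (s *\<^sub>R v) = s *\<^sub>R f' v" for s
    using has_derivative_linear[OF f] by (rule linear_scale)
  have "((\<lambda>s. x + s *\<^sub>R v) has_derivative (\<lambda>s. s *\<^sub>R v)) (at 0)"
    by (auto intro!: derivative_eq_intros)
  with f have "((\<lambda>s. f (x + s *\<^sub>R v)) has_derivative (\<lambda>s. s *\<^sub>R f' v)) (at 0)"
    using has_derivative_compose[of "\<lambda>s. x + s *\<^sub>R v" "\<lambda>s. s *\<^sub>R v" 0 UNIV f f'] by (simp add: lin)
  then have "(\<lambda>s. norm (f (x + s *\<^sub>R v) - f x - s *\<^sub>R f' v) / norm s) \<midarrow>0\<rightarrow> 0"
    by (simp add: has_derivative_at)
  then have "(\<lambda>s. norm ((1 / s) *\<^sub>R (f (x + s *\<^sub>R v) - f x) - f' v)) \<midarrow>0\<rightarrow> 0"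
  proof (rule LIM_cong[THEN iffD1, rotated 3])
    fix s :: real assume "s \<noteq> 0"
    then have "(1 / s) *\<^sub>R (f (x + s *\<^sub>R v) - f x) - f' v = (1 / s) *\<^sub>R (f (x + s *\<^sub>R v) - f x - s *\<^sub>R f' v)"
      by (simp add: scaleR_diff_right)
    then show "norm (f (x + s *\<^sub>R v) - f x - s *\<^sub>R f' v) / norm s
        = norm ((1 / s) *\<^sub>R (f (x + s *\<^sub>R v) - f x) - f' v)"
      by (simp add: divide_inverse_commute)
  qed simp_all
  then have "(\<lambda>s. (1 / s) *\<^sub>R (f (x + s *\<^sub>R v) - f x)) \<midarrow>0\<rightarrow> f' v"
    by (simp add: tendsto_norm_zero_iff LIM_zero_iff)
  with t t_nz show ?thesis by (simp add: LIMSEQ_SEQ_conv[symmetric])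
qed

lemma sum_list_moments_split:
  assumes T: "linear T"
  shows "(\<Sum>(a,c)\<leftarrow>L. c *\<^sub>R \<phi> a) = (\<Sum>(a,c)\<leftarrow>L. c *\<^sub>R (\<phi> a - \<phi> x - T (a - x)))
           + (\<Sum>(a,c)\<leftarrow>L. c) *\<^sub>R \<phi> x + T (\<Sum>(a,c)\<leftarrow>L. c *\<^sub>R (a - x))"
proof (induction L)
  case Nil
  then show ?case using linear_0[OF T] by simp
next
  case (Cons p L)
  obtain a c where "p = (a,c)" by force
  with Cons show ?case
    by (simp add: linear_add[OF T] linear_diff[OF T] linear_scale[OF T] algebra_simps)
qed

definition vanishing_moments :: "'a::real_vector \<Rightarrow> ('a \<times> real) list \<Rightarrow> bool" where
  "vanishing_moments x L \<longleftrightarrow> (\<Sum>(a,c)\<leftarrow>L. c) = 0 \<and> (\<Sum>(a,c)\<leftarrow>L. c *\<^sub>R (a - x)) = 0"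

definition abs_moment :: "'a::real_normed_vector \<Rightarrow> ('a \<times> real) list \<Rightarrow> real" where
  "abs_moment x L = (\<Sum>(a,c)\<leftarrow>L. \<bar>c\<bar> * norm (a - x))"

lemma norm_sum_list_vanishing_moments_le:
  assumes T: "linear T" and L: "vanishing_moments x L"
    and rem: "\<And>a c. (a,c) \<in> set L \<Longrightarrow> norm (\<phi> a - \<phi> x - T (a - x)) \<le> \<epsilon> * norm (a - x)"
  shows "norm (\<Sum>(a,c)\<leftarrow>L. c *\<^sub>R \<phi> a) \<le> \<epsilon> * abs_moment x L"
proof -
  have "norm (\<Sum>(a,c)\<leftarrow>L. c *\<^sub>R \<phi> a) = norm (\<Sum>(a,c)\<leftarrow>L. c *\<^sub>R (\<phi> a - \<phi> x - T (a - x)))"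
    using sum_list_moments_split[OF T, of \<phi> L x] L linear_0[OF T] by (simp add: vanishing_moments_def)
  also have "\<dots> \<le> (\<Sum>(a,c)\<leftarrow>L. norm (c *\<^sub>R (\<phi> a - \<phi> x - T (a - x))))"
    by (induction L) (auto intro: order_trans[OF norm_triangle_ineq])
  also have "\<dots> \<le> (\<Sum>(a,c)\<leftarrow>L. \<epsilon> * (\<bar>c\<bar> * norm (a - x)))"
  proof (intro sum_list_mono, clarify)
    fix a c assume "(a,c) \<in> set L"
    then show "norm (c *\<^sub>R (\<phi> a - \<phi> x - T (a - x))) \<le> \<epsilon> * (\<bar>c\<bar> * norm (a - x))"
      using mult_left_mono[OF rem, of a c "\<bar>c\<bar>"] by (simp add: mult.left_commute)
  qed
  also have "\<dots> = \<epsilon> * abs_moment x L"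
    by (simp add: abs_moment_def sum_list_const_mult split_def)
  finally show ?thesis .
qed

lemma bounded_linear_matrix_vector_mult_left: "bounded_linear (\<lambda>M::real^'n^'m. M *v w)"
  unfolding linear_conv_bounded_linear[symmetric]
  by (rule linearI) (simp_all add: matrix_vector_mult_add_rdistrib scaleR_matrix_vector_assoc)

definition vec_fam :: "real^'n \<Rightarrow> ((real^'n) \<times> real) list \<Rightarrow> ('n::finite) kernel_fam" where
  "vec_fam w L = map (\<lambda>(a,c). (a, c *\<^sub>R w)) L"

lemma vec_fam_simps [simp]:
  "vec_fam w [] = []" "vec_fam w ((a,c) # L) = (a, c *\<^sub>R w) # vec_fam w L"
  by (simp_all add: vec_fam_def)

lemma kip_vec_fam:
  "kip K (vec_fam w L) (vec_fam w L) = (\<Sum>(a,c)\<leftarrow>L. c * (\<Sum>(b,d)\<leftarrow>L. d * ((K a b *v w) \<bullet> w)))"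
  by (simp add: kip_def vec_fam_def split_def o_def sum_list_const_mult matrix_vector_mult_scaleR
      inner_commute mult.left_commute)

lemma has_derivative_partial_right:
  assumes "(f has_derivative f') (at (r,s))"
  shows "((\<lambda>s'. f (r,s')) has_derivative (\<lambda>\<beta>. f' (0,\<beta>))) (at s)"
proof -
  have "((\<lambda>s'. (r, s')) has_derivative (\<lambda>\<beta>. (0, \<beta>))) (at s)"
    by (intro derivative_eq_intros) auto
  from has_derivative_compose[OF this assms] show ?thesis by simp
qed

lemma has_derivative_partial_left:
  assumes "(f has_derivative f') (at (r,s))"
  shows "((\<lambda>r'. f (r',s)) has_derivative (\<lambda>\<alpha>. f' (\<alpha>,0))) (at r)"
proof -
  have "((\<lambda>r'. (r', s)) has_derivative (\<lambda>\<alpha>. (\<alpha>, 0))) (at r)"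
    by (intro derivative_eq_intros) auto
  from has_derivative_compose[OF this assms] show ?thesis by simp
qed

locale C2_kernel_space = pd_kernel_space X K for X :: "(real^'n) set" and K +
  fixes D :: "(real^'n) \<times> (real^'n) \<Rightarrow> ((real^'n) \<times> (real^'n)) \<Rightarrow>\<^sub>L (real^'n^'n)"
    and D2 :: "(real^'n) \<times> (real^'n) \<Rightarrow> ((real^'n) \<times> (real^'n)) \<Rightarrow>\<^sub>L (((real^'n) \<times> (real^'n)) \<Rightarrow>\<^sub>L (real^'n^'n))"
  assumes open_X: "open X"
    and kernel_has_derivative: "\<And>p. p \<in> X \<times> X \<Longrightarrow> ((\<lambda>(r,s). K r s) has_derivative blinfun_apply (D p)) (at p)"
    and D_has_derivative: "\<And>p. p \<in> X \<times> X \<Longrightarrow> (D has_derivative blinfun_apply (D2 p)) (at p)"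
    and continuous_on_D2: "continuous_on (X \<times> X) D2"

lemma C2_kernel_spaceE:
  assumes "pd_kernel X K" "C2_kernel X K" "open X"
  obtains D D2 where "C2_kernel_space X K D D2"
  using assms unfolding C2_kernel_def C2_on_def C2_kernel_space_def C2_kernel_space_axioms_def
    pd_kernel_space_def
  by fast

context C2_kernel_space
begin

lemma kernel_has_derivative_right:
  "r \<in> X \<Longrightarrow> s \<in> X \<Longrightarrow> ((\<lambda>s'. K r s') has_derivative (\<lambda>\<beta>. D (r,s) (0,\<beta>))) (at s)"
  using has_derivative_partial_right[OF kernel_has_derivative[of "(r,s)"]] by simp

lemma kernel_has_derivative_left:
  "r \<in> X \<Longrightarrow> s \<in> X \<Longrightarrow> ((\<lambda>r'. K r' s) has_derivative (\<lambda>\<alpha>. D (r,s) (\<alpha>,0))) (at r)"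
  using has_derivative_partial_left[OF kernel_has_derivative[of "(r,s)"]] by simp

lemma D_has_derivative_right:
  "r \<in> X \<Longrightarrow> s \<in> X \<Longrightarrow> ((\<lambda>s'. D (r,s')) has_derivative (\<lambda>\<beta>. D2 (r,s) (0,\<beta>))) (at s)"
  using has_derivative_partial_right[OF D_has_derivative[of "(r,s)"]] by simp

lemma D2_locally_close:
  assumes x: "x \<in> X" and e: "e > 0"
  obtains \<delta> where "\<delta> > 0" "ball x \<delta> \<subseteq> X"
    "\<And>\<xi> s. \<xi> \<in> ball x \<delta> \<Longrightarrow> s \<in> ball x \<delta> \<Longrightarrow> norm (D2 (\<xi>,s) - D2 (\<xi>,x)) < e"
proof -
  have "isCont D2 (x,x)"
    using continuous_on_D2 open_X x by (simp add: continuous_on_eq_continuous_at open_Times)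
  then obtain d where d: "d > 0" and hd: "\<And>p. dist p (x,x) < d \<Longrightarrow> dist (D2 p) (D2 (x,x)) < e/2"
    unfolding continuous_at_eps_delta using e by (meson half_gt_zero)
  obtain d0 where d0: "d0 > 0" "ball x d0 \<subseteq> X" using open_X x by (meson openE)
  define \<delta> where "\<delta> = min (d/2) d0"
  have \<delta>: "\<delta> > 0" "ball x \<delta> \<subseteq> X" using d d0 by (auto simp: \<delta>_def)
  have near: "dist (\<xi>,s) (x,x) < d" if "\<xi> \<in> ball x \<delta>" "s \<in> cball x \<delta>" for \<xi> s
  proof -
    have "dist (\<xi>,s) (x,x) \<le> dist \<xi> x + dist s x"
      using norm_Pair_le[of "\<xi> - x" "s - x"] by (simp add: dist_norm)
    also have "\<dots> < d" using that by (auto simp: \<delta>_def dist_commute)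
    finally show ?thesis .
  qed
  have "norm (D2 (\<xi>,s) - D2 (\<xi>,x)) < e" if "\<xi> \<in> ball x \<delta>" "s \<in> ball x \<delta>" for \<xi> s
  proof -
    have "norm (D2 (\<xi>,s) - D2 (\<xi>,x)) \<le> dist (D2 (\<xi>,s)) (D2 (x,x)) + dist (D2 (\<xi>,x)) (D2 (x,x))"
      by (metis dist_commute dist_norm dist_triangle)
    also have "\<dots> < e/2 + e/2"
      using that \<delta>(1) by (intro add_strict_mono hd near) auto
    finally show ?thesis by simp
  qed
  with \<delta> show ?thesis by (rule that)
qed

lemma D_right_linearization:
  assumes x: "x \<in> X" and e: "e > 0"
  obtains \<delta> where "\<delta> > 0" "ball x \<delta> \<subseteq> X"
    "\<And>\<xi> a. \<xi> \<in> ball x \<delta> \<Longrightarrow> a \<in> ball x \<delta> \<Longrightarrow>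
       norm (D (\<xi>,a) - D (\<xi>,x) - D2 (\<xi>,x) (0, a - x)) \<le> e * norm (a - x)"
proof -
  obtain \<delta> where \<delta>: "\<delta> > 0" "ball x \<delta> \<subseteq> X"
    and close: "\<And>\<xi> s. \<xi> \<in> ball x \<delta> \<Longrightarrow> s \<in> ball x \<delta> \<Longrightarrow> norm (D2 (\<xi>,s) - D2 (\<xi>,x)) < e"
    using D2_locally_close[OF x e] by blast
  have "norm (D (\<xi>,a) - D (\<xi>,x) - D2 (\<xi>,x) (0, a - x)) \<le> e * norm (a - x)"
    if \<xi>: "\<xi> \<in> ball x \<delta>" and a: "a \<in> ball x \<delta>" for \<xi> a
  proof -
    have "norm (D (\<xi>,a) - D (\<xi>,x) - (\<lambda>\<beta>. D2 (\<xi>,x) (0,\<beta>)) (a - x)) \<le> norm (a - x) * e"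
    proof (rule differentiable_bound_linearization[where S="ball x \<delta>" and f'="\<lambda>s \<beta>. D2 (\<xi>,s) (0,\<beta>)"])
      show "x + t *\<^sub>R (a - x) \<in> ball x \<delta>" if "t \<in> {0..1}" for t
      proof -
        have "t * norm (a - x) \<le> norm (a - x)" using that by (simp add: mult_left_le_one_le)
        with a that show ?thesis by (simp add: dist_norm norm_minus_commute)
      qed
      show "((\<lambda>s. D (\<xi>,s)) has_derivative (\<lambda>\<beta>. D2 (\<xi>,s) (0,\<beta>))) (at s within ball x \<delta>)"
        if "s \<in> ball x \<delta>" for s
        using that \<xi> \<delta>(2) D_has_derivative_right has_derivative_at_withinI by blast
      show "onorm ((\<lambda>\<beta>. D2 (\<xi>,s) (0,\<beta>)) - (\<lambda>\<beta>. D2 (\<xi>,x) (0,\<beta>))) \<le> e" if "s \<in> ball x \<delta>" for s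
      proof (rule onorm_le)
        fix \<beta> :: "real^'n"
        have "norm ((D2 (\<xi>,s) - D2 (\<xi>,x)) (0,\<beta>)) \<le> norm (D2 (\<xi>,s) - D2 (\<xi>,x)) * norm \<beta>"
          using norm_blinfun[of "D2 (\<xi>,s) - D2 (\<xi>,x)" "(0,\<beta>)"] by (simp add: norm_Pair)
        also have "\<dots> \<le> e * norm \<beta>" using close[OF \<xi> that] by (intro mult_right_mono) auto
        finally show "norm (((\<lambda>\<beta>. D2 (\<xi>,s) (0,\<beta>)) - (\<lambda>\<beta>. D2 (\<xi>,x) (0,\<beta>))) \<beta>) \<le> e * norm \<beta>"
          by (simp add: blinfun.bilinear_simps)
      qed
    qed (use \<delta> in simp)
    then show ?thesis by (simp add: mult.commute)
  qed
  with \<delta> show ?thesis by (rule that)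
qed

definition kernel_sum :: "(real^'n^'n \<Rightarrow> real) \<Rightarrow> ((real^'n) \<times> real) list \<Rightarrow> real^'n \<Rightarrow> real" where
  "kernel_sum lf L r = (\<Sum>(a,c)\<leftarrow>L. c * lf (K r a))"

definition kernel_sum_deriv :: "(real^'n^'n \<Rightarrow> real) \<Rightarrow> ((real^'n) \<times> real) list \<Rightarrow> real^'n \<Rightarrow> real^'n \<Rightarrow> real" where
  "kernel_sum_deriv lf L r \<alpha> = (\<Sum>(a,c)\<leftarrow>L. c * lf (D (r,a) (\<alpha>,0)))"

lemma kernel_sum_has_derivative:
  assumes lf: "bounded_linear lf" and r: "r \<in> X" and L: "\<forall>(a,c)\<in>set L. a \<in> X"
  shows "(kernel_sum lf L has_derivative kernel_sum_deriv lf L r) (at r)"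
  using L unfolding kernel_sum_def kernel_sum_deriv_def
proof (induction L)
  case (Cons p L)
  obtain a c where p: "p = (a,c)" by force
  with Cons.prems have "a \<in> X" by auto
  have "((\<lambda>r. c * lf (K r a)) has_derivative (\<lambda>\<alpha>. c * lf (D (r,a) (\<alpha>,0)))) (at r)"
    by (rule has_derivative_mult_right[OF bounded_linear.has_derivative[OF lf kernel_has_derivative_left[OF r \<open>a \<in> X\<close>]]])
  from has_derivative_add[OF this Cons.IH] Cons.prems show ?case by (simp add: p)
qed simp

lemma abs_kernel_sum_deriv_le:
  assumes lf: "bounded_linear lf" "\<And>M. norm (lf M) \<le> norm M * C" and "0 \<le> C"
    and lin: "\<And>\<xi> a. \<xi> \<in> B \<Longrightarrow> a \<in> B \<Longrightarrow> norm (D (\<xi>,a) - D (\<xi>,x) - D2 (\<xi>,x) (0, a - x)) \<le> e * norm (a - x)"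
    and L: "vanishing_moments x L" "\<forall>(a,c)\<in>set L. a \<in> B" and \<xi>: "\<xi> \<in> B"
  shows "\<bar>kernel_sum_deriv lf L \<xi> \<alpha>\<bar> \<le> C * e * norm \<alpha> * abs_moment x L"
proof -
  define T where "T u = lf (D2 (\<xi>,x) (0,u) (\<alpha>,0))" for u
  have "bounded_linear (\<lambda>u. D2 (\<xi>,x) (0::real^'n, u))"
    by (rule bounded_linear_compose[OF blinfun.bounded_linear_right bounded_linear_Pair])
      (auto intro: bounded_linear_zero bounded_linear_ident)
  then have "linear T"
    unfolding T_def
    by (intro bounded_linear.linear bounded_linear_compose[OF lf(1)]
        bounded_linear_compose[OF blinfun.bounded_linear_left])
  have "norm (\<Sum>(a,c)\<leftarrow>L. c *\<^sub>R lf (D (\<xi>,a) (\<alpha>,0))) \<le> (C * e * norm \<alpha>) * abs_moment x L"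
  proof (rule norm_sum_list_vanishing_moments_le[OF \<open>linear T\<close> L(1)])
    fix a c assume "(a,c) \<in> set L"
    with L(2) have "a \<in> B" by auto
    define E where "E = D (\<xi>,a) - D (\<xi>,x) - D2 (\<xi>,x) (0, a - x)"
    have eq: "lf (D (\<xi>,a) (\<alpha>,0)) - lf (D (\<xi>,x) (\<alpha>,0)) - T (a - x) = lf (E (\<alpha>,0))"
      by (simp add: T_def E_def blinfun.bilinear_simps linear_diff[OF bounded_linear.linear[OF lf(1)]])
    have "norm (E (\<alpha>,0)) \<le> norm E * norm \<alpha>"
      using norm_blinfun[of E "(\<alpha>,0)"] by (simp add: norm_Pair)
    also have "\<dots> \<le> (e * norm (a - x)) * norm \<alpha>"
      using lin[OF \<xi> \<open>a \<in> B\<close>] by (intro mult_right_mono) (auto simp: E_def)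
    finally have "norm (E (\<alpha>,0)) * C \<le> (e * norm (a - x)) * norm \<alpha> * C"
      using \<open>0 \<le> C\<close> by (rule mult_right_mono)
    then show "norm (lf (D (\<xi>,a) (\<alpha>,0)) - lf (D (\<xi>,x) (\<alpha>,0)) - T (a - x)) \<le> C * e * norm \<alpha> * norm (a - x)"
      using lf(2)[of "E (\<alpha>,0)"] by (simp add: eq ac_simps)
  qed
  then show ?thesis by (simp add: kernel_sum_deriv_def)
qed

lemma kernel_sum_remainder_le:
  assumes lf: "bounded_linear lf" "\<And>M. norm (lf M) \<le> norm M * C" and "0 \<le> C"
    and \<delta>: "0 < \<delta>" "ball x \<delta> \<subseteq> X"
    and lin: "\<And>\<xi> a. \<xi> \<in> ball x \<delta> \<Longrightarrow> a \<in> ball x \<delta> \<Longrightarrow>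
       norm (D (\<xi>,a) - D (\<xi>,x) - D2 (\<xi>,x) (0, a - x)) \<le> e * norm (a - x)"
    and L: "vanishing_moments x L" "\<forall>(a,c)\<in>set L. a \<in> ball x \<delta>" and b: "b \<in> ball x \<delta>"
  shows "norm (kernel_sum lf L b - kernel_sum lf L x - kernel_sum_deriv lf L x (b - x))
    \<le> norm (b - x) * (2 * C * e * abs_moment x L)"
proof (rule differentiable_bound_linearization[where S="ball x \<delta>" and f'="kernel_sum_deriv lf L"])
  show "x + t *\<^sub>R (b - x) \<in> ball x \<delta>" if "t \<in> {0..1}" for t
  proof -
    have "t * norm (b - x) \<le> norm (b - x)" using that by (simp add: mult_left_le_one_le)
    with b that show ?thesis by (simp add: dist_norm norm_minus_commute)
  qed
  show "(kernel_sum lf L has_derivative kernel_sum_deriv lf L r) (at r within ball x \<delta>)"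
    if "r \<in> ball x \<delta>" for r
  proof -
    have "r \<in> X" "\<forall>(a,c)\<in>set L. a \<in> X" using that \<delta>(2) L(2) by fastforce+
    then show ?thesis using kernel_sum_has_derivative[OF lf(1)] has_derivative_at_withinI by blast
  qed
  show "onorm (kernel_sum_deriv lf L r - kernel_sum_deriv lf L x) \<le> 2 * C * e * abs_moment x L"
    if "r \<in> ball x \<delta>" for r
  proof (rule onorm_le)
    fix \<alpha> :: "real^'n"
    define B where "B = C * e * norm \<alpha> * abs_moment x L"
    have "\<bar>kernel_sum_deriv lf L r \<alpha>\<bar> \<le> B" "\<bar>kernel_sum_deriv lf L x \<alpha>\<bar> \<le> B"
      using that \<delta>(1) unfolding B_def by (auto intro!: abs_kernel_sum_deriv_le[OF lf \<open>0 \<le> C\<close> lin L])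
    then show "norm ((kernel_sum_deriv lf L r - kernel_sum_deriv lf L x) \<alpha>) \<le> 2 * C * e * abs_moment x L * norm \<alpha>"
      by (simp add: B_def algebra_simps)
  qed
qed (use \<delta> in simp)

text \<open>The key estimate: on families with vanishing moments the Gram form of the kernel is of
  second order, because the kernel is \<open>C\<^sup>2\<close>.\<close>

lemma kip_vec_fam_bound:
  assumes x: "x \<in> X" and e: "e > 0"
  obtains \<delta> where "\<delta> > 0" "ball x \<delta> \<subseteq> X"
    "\<And>L. vanishing_moments x L \<Longrightarrow> \<forall>(a,c)\<in>set L. a \<in> ball x \<delta> \<Longrightarrow>
       kip K (vec_fam w L) (vec_fam w L) \<le> e * (abs_moment x L)^2"
proof -
  define lf where "lf M = (M *v w) \<bullet> w" for M :: "real^'n^'n"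
  have lf: "bounded_linear lf"
    unfolding lf_def by (rule bounded_linear_inner_left_comp[OF bounded_linear_matrix_vector_mult_left])
  then obtain C where C: "C > 0" "\<And>M. norm (lf M) \<le> norm M * C" using bounded_linear.pos_bounded by blast
  define e1 where "e1 = e / (2 * C)"
  obtain \<delta> where \<delta>: "\<delta> > 0" "ball x \<delta> \<subseteq> X"
    and lin: "\<And>\<xi> a. \<xi> \<in> ball x \<delta> \<Longrightarrow> a \<in> ball x \<delta> \<Longrightarrow>
       norm (D (\<xi>,a) - D (\<xi>,x) - D2 (\<xi>,x) (0, a - x)) \<le> e1 * norm (a - x)"
    using D_right_linearization[OF x, of e1] e C by (auto simp: e1_def)
  show ?thesis
  proof (rule that[OF \<delta>])
    fix L :: "((real^'n) \<times> real) list"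
    assume L: "vanishing_moments x L" "\<forall>(a,c)\<in>set L. a \<in> ball x \<delta>"
    have "linear (kernel_sum_deriv lf L x)"
      using L(2) \<delta> x by (intro has_derivative_linear[OF kernel_sum_has_derivative[OF lf x]]) fastforce
    then have "norm (\<Sum>(a,c)\<leftarrow>L. c *\<^sub>R kernel_sum lf L a) \<le> (2 * C * e1 * abs_moment x L) * abs_moment x L"
      using L kernel_sum_remainder_le[OF lf C(2) _ \<delta> lin L] C(1)
      by (intro norm_sum_list_vanishing_moments_le) (auto simp: mult.commute)
    moreover have "kip K (vec_fam w L) (vec_fam w L) = (\<Sum>(a,c)\<leftarrow>L. c *\<^sub>R kernel_sum lf L a)"
      by (simp add: kip_vec_fam kernel_sum_def lf_def)
    ultimately show "kip K (vec_fam w L) (vec_fam w L) \<le> e * (abs_moment x L)^2"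
      using C(1) by (simp add: e1_def power2_eq_square)
  qed
qed

text \<open>\<open>dK_dir x v w\<close> is the derivative of \<open>s \<mapsto> K(\<cdot>,s) w\<close> at \<open>x\<close> in direction \<open>v\<close>, i.e.
  \<open>\<Sum>\<^sub>p v\<^sub>p \<partial>\<^sub>p K\<^sub>x w\<close>; \<open>dq_fam x v w \<tau>\<close> represents the difference quotient
  \<open>(K(\<cdot>, x + \<tau> v) w - K(\<cdot>, x) w) / \<tau>\<close>.\<close>

definition dK_dir :: "real^'n \<Rightarrow> real^'n \<Rightarrow> real^'n \<Rightarrow> real^'n \<Rightarrow> real^'n" where
  "dK_dir x v w = (\<lambda>z. D (z,x) (0,v) *v w)"

definition dq_fam :: "real^'n \<Rightarrow> real^'n \<Rightarrow> real^'n \<Rightarrow> real \<Rightarrow> 'n kernel_fam" where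
  "dq_fam x v w \<tau> = vec_fam w [(x + \<tau> *\<^sub>R v, 1/\<tau>), (x, -(1/\<tau>))]"

lemma kip_dq_fam_diff_less:
  assumes x: "x \<in> X" and e: "e > 0"
  obtains \<delta> where "\<delta> > 0"
    "\<And>\<tau> \<sigma>. 0 < \<tau> \<Longrightarrow> 0 < \<sigma> \<Longrightarrow> \<tau> * norm v < \<delta> \<Longrightarrow> \<sigma> * norm v < \<delta> \<Longrightarrow>
       kip K (fam_diff (dq_fam x v w \<tau>) (dq_fam x v w \<sigma>)) (fam_diff (dq_fam x v w \<tau>) (dq_fam x v w \<sigma>)) < e"
proof -
  define e' where "e' = e / (4 * (norm v)^2 + 1)"
  have d: "0 < 4 * (norm v)^2 + 1" by (simp add: add_nonneg_pos)
  have "e' * (2 * norm v)^2 = e * (4 * (norm v)^2 / (4 * (norm v)^2 + 1))"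
    by (simp add: e'_def power_mult_distrib)
  also have "\<dots> < e * 1"
    using e d by (intro mult_strict_left_mono) auto
  finally have e': "e' > 0" "e' * (2 * norm v)^2 < e"
    using e d by (simp_all add: e'_def)
  obtain \<delta> where \<delta>: "\<delta> > 0" "ball x \<delta> \<subseteq> X"
    and bound: "\<And>L. vanishing_moments x L \<Longrightarrow> \<forall>(a,c)\<in>set L. a \<in> ball x \<delta> \<Longrightarrow>
       kip K (vec_fam w L) (vec_fam w L) \<le> e' * (abs_moment x L)^2"
    using kip_vec_fam_bound[OF x e'(1), where w = w] by blast
  show ?thesis
  proof (rule that[OF \<delta>(1)])
    fix \<tau> \<sigma> :: real assume "0 < \<tau>" "0 < \<sigma>" "\<tau> * norm v < \<delta>" "\<sigma> * norm v < \<delta>"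
    define L where "L = [(x + \<tau> *\<^sub>R v, 1/\<tau>), (x, -(1/\<tau>)), (x + \<sigma> *\<^sub>R v, -(1/\<sigma>)), (x, 1/\<sigma>)]"
    have "fam_diff (dq_fam x v w \<tau>) (dq_fam x v w \<sigma>) = vec_fam w L"
      by (simp add: dq_fam_def L_def fam_diff_def)
    moreover have "abs_moment x L = 2 * norm v"
      using \<open>0 < \<tau>\<close> \<open>0 < \<sigma>\<close> by (simp add: L_def abs_moment_def)
    moreover have "kip K (vec_fam w L) (vec_fam w L) \<le> e' * (abs_moment x L)^2"
      using \<open>0 < \<tau>\<close> \<open>0 < \<sigma>\<close> \<open>\<tau> * norm v < \<delta>\<close> \<open>\<sigma> * norm v < \<delta>\<close> \<delta>(1)
      by (intro bound) (auto simp: L_def dist_norm vanishing_moments_def)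
    ultimately show "kip K (fam_diff (dq_fam x v w \<tau>) (dq_fam x v w \<sigma>))
        (fam_diff (dq_fam x v w \<tau>) (dq_fam x v w \<sigma>)) < e"
      using e'(2) by simp
  qed
qed

lemma snorm_Cauchy_dq_fam:
  assumes x: "x \<in> X" and t: "\<And>k. t k > 0" "t \<longlonglongrightarrow> 0" and tX: "\<And>k. x + t k *\<^sub>R v \<in> X"
  shows "S.snorm_Cauchy (\<lambda>k. kfun K (dq_fam x v w (t k)))"
  unfolding S.snorm_Cauchy_iff_ip
proof (intro conjI allI impI)
  have dq_on_X: "on_X (dq_fam x v w (t k))" for k using x tX by (simp add: dq_fam_def)
  then show "kfun K (dq_fam x v w (t k)) \<in> kspan" for k by (rule kfun_in_kspan)
  fix e :: real assume "e > 0"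
  obtain \<delta> where "\<delta> > 0"
    and small: "\<And>\<tau> \<sigma>. 0 < \<tau> \<Longrightarrow> 0 < \<sigma> \<Longrightarrow> \<tau> * norm v < \<delta> \<Longrightarrow> \<sigma> * norm v < \<delta> \<Longrightarrow>
       kip K (fam_diff (dq_fam x v w \<tau>) (dq_fam x v w \<sigma>)) (fam_diff (dq_fam x v w \<tau>) (dq_fam x v w \<sigma>)) < e"
    using kip_dq_fam_diff_less[OF x \<open>e > 0\<close>, where v = v and w = w] by blast
  have "\<forall>\<^sub>F k in sequentially. t k * norm v < \<delta>"
    using tendsto_mult_left_zero[OF t(2), of "norm v"] \<open>\<delta> > 0\<close> by (rule order_tendstoD)
  then obtain N where N: "\<And>k. k \<ge> N \<Longrightarrow> t k * norm v < \<delta>" by (auto simp: eventually_sequentially)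
  have "kspan_ip (kfun K (dq_fam x v w (t k)) - kfun K (dq_fam x v w (t l)))
      (kfun K (dq_fam x v w (t k)) - kfun K (dq_fam x v w (t l))) < e" if "k \<ge> N" "l \<ge> N" for k l
    using small[OF t(1) t(1) N N, OF that] dq_on_X
    by (simp add: kspan_ip_kfun flip: kfun_fam_diff)
  then show "\<exists>N. \<forall>k\<ge>N. \<forall>l\<ge>N. kspan_ip (kfun K (dq_fam x v w (t k)) - kfun K (dq_fam x v w (t l)))
      (kfun K (dq_fam x v w (t k)) - kfun K (dq_fam x v w (t l))) < e" by blast
qed

lemma tendsto_kfun_dq_fam:
  assumes x: "x \<in> X" and z: "z \<in> X" and t: "\<And>k. t k > 0" "t \<longlonglongrightarrow> 0"
  shows "(\<lambda>k. kfun K (dq_fam x v w (t k)) z) \<longlonglongrightarrow> dK_dir x v w z"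
proof -
  have "((\<lambda>s. K z s *v w) has_derivative (\<lambda>\<beta>. D (z,x) (0,\<beta>) *v w)) (at x)"
    by (rule bounded_linear.has_derivative[OF bounded_linear_matrix_vector_mult_left kernel_has_derivative_right[OF z x]])
  from tendsto_difference_quotient[OF this t(2), of v] t(1)
  have "(\<lambda>k. (1 / t k) *\<^sub>R (K z (x + t k *\<^sub>R v) *v w - K z x *v w)) \<longlonglongrightarrow> D (z,x) (0,v) *v w"
    by (simp add: less_imp_neq[symmetric])
  moreover have "kfun K (dq_fam x v w (t k)) z = (1 / t k) *\<^sub>R (K z (x + t k *\<^sub>R v) *v w - K z x *v w)" for k
    using matrix_vector_mult_scaleR[of "K z x" "-(1 / t k)" w]
    by (simp add: dq_fam_def matrix_vector_mult_scaleR scaleR_diff_right)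
  ultimately show ?thesis by (simp add: dK_dir_def)
qed

lemma approximates_dK_dir:
  assumes x: "x \<in> X" and t: "\<And>k. t k > 0" "t \<longlonglongrightarrow> 0" and tX: "\<And>k. x + t k *\<^sub>R v \<in> X"
  shows "approximates (dK_dir x v w) (\<lambda>k. kfun K (dq_fam x v w (t k)))"
  unfolding approximates_def
  using snorm_Cauchy_dq_fam[of x t, OF x t tX] tendsto_kfun_dq_fam[of x _ t, OF x _ t] by blast

lemma dK_dir_in_rkhs:
  assumes x: "x \<in> X"
  shows "dK_dir x v w \<in> rkhs X K"
proof -
  obtain d0 where d0: "d0 > 0" "ball x d0 \<subseteq> X" using open_X x by (meson openE)
  define c where "c = d0 / (norm v + 1)"
  have n: "0 < norm v + 1" using norm_ge_zero[of v] by linarith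
  have c: "c > 0" "c * norm v < d0"
    using d0 n by (simp_all add: c_def pos_divide_less_eq distrib_left)
  define t where "t k = c * inverse (real (Suc k))" for k
  have t: "t k > 0" "t k \<le> c" for k using c by (simp_all add: t_def field_simps)
  have t0: "t \<longlonglongrightarrow> 0" unfolding t_def by (rule tendsto_mult_right_zero[OF LIMSEQ_inverse_real_of_nat])
  have tX: "\<And>k. x + t k *\<^sub>R v \<in> X"
  proof -
    fix k
    have "t k * norm v < d0" using mult_right_mono[OF t(2), of "norm v" k] c(2) by simp
    with t(1)[of k] d0(2) show "x + t k *\<^sub>R v \<in> X" by (auto simp: dist_norm)
  qed
  show ?thesis
    using approximates_dK_dir[of x t, OF x t(1) t0 tX] rkhs_iff_approximates by blast
qed

lemma dK_eq_dK_dir: "x \<in> X \<Longrightarrow> z \<in> X \<Longrightarrow> dK K p x w z = dK_dir x (axis p 1) w z"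
  using frechet_derivative_at[OF kernel_has_derivative_right, of z x, symmetric]
  by (simp add: dK_def dK_dir_def)

lemma dK_in_rkhs: "x \<in> X \<Longrightarrow> dK K p x w \<in> rkhs X K"
  using rkhs_cong[of "dK K p x w" "dK_dir x (axis p 1) w"] dK_eq_dK_dir dK_dir_in_rkhs by blast

lemma dK_dir_eq_sum_dK:
  assumes x: "x \<in> X" and z: "z \<in> X"
  shows "dK_dir x v w z = (\<Sum>p\<in>UNIV. v $ p *\<^sub>R dK K p x w z)"
proof -
  define \<phi> where "\<phi> \<beta> = D (z,x) (0,\<beta>) *v w" for \<beta>
  have "linear \<phi>"
    using bounded_linear.has_derivative[OF bounded_linear_matrix_vector_mult_left kernel_has_derivative_right[OF z x]]
    unfolding \<phi>_def by (rule has_derivative_linear)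
  then have "\<phi> (\<Sum>p\<in>UNIV. v $ p *\<^sub>R axis p 1) = (\<Sum>p\<in>UNIV. v $ p *\<^sub>R \<phi> (axis p 1))"
    by (simp add: linear_sum linear_scale)
  then show ?thesis
    using basis_expansion[of v] by (simp add: \<phi>_def dK_dir_def dK_eq_dK_dir[OF x z] scalar_mult_eq_scaleR)
qed

lemma rkhs_ip_dK_dir_eq_0:
  assumes x: "x \<in> X" and h: "h \<in> rkhs X K" and orth: "\<And>p. rkhs_ip h (dK K p x w) = 0"
  shows "rkhs_ip h (dK_dir x v w) = 0"
proof -
  have "rkhs_ip h (dK_dir x v w) = rkhs_ip h (\<Sum>p\<in>UNIV. v $ p *\<^sub>R dK K p x w)"
    using x by (intro rkhs_ip_cong_right[OF h dK_dir_in_rkhs])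
      (simp_all add: sum_fun_apply dK_dir_eq_sum_dK)
  also have "\<dots> = 0"
    using h orth x by (intro H.orthogonal_to_span) (auto intro: dK_in_rkhs)
  finally show ?thesis .
qed

lemma abs_inner_sub_rkhs_ip_dq_fam_le:
  assumes h: "h \<in> rkhs X K" "h x = 0" and X: "x \<in> X" "y \<in> X" "x + \<tau> *\<^sub>R (y - x) \<in> X"
  defines "L \<equiv> [(y, 1), (x, -1), (x + \<tau> *\<^sub>R (y - x), -(1 / \<tau>)), (x, 1 / \<tau>)]"
  shows "\<bar>h y \<bullet> w - rkhs_ip h (kfun K (dq_fam x (y - x) w \<tau>))\<bar>
    \<le> H.snorm h * sqrt (kip K (vec_fam w L) (vec_fam w L))"
proof -
  have L_X: "on_X (vec_fam w L)" and dq_X: "on_X (dq_fam x (y - x) w \<tau>)"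
    using X by (auto simp: L_def dq_fam_def)
  have "h y \<bullet> w - rkhs_ip h (kfun K (dq_fam x (y - x) w \<tau>)) = rkhs_ip h (kfun K (vec_fam w L))"
    using h L_X dq_X by (simp add: rkhs_ip_kfun_right L_def dq_fam_def algebra_simps)
  moreover have "\<bar>rkhs_ip h (kfun K (vec_fam w L))\<bar> \<le> H.snorm h * H.snorm (kfun K (vec_fam w L))"
    by (rule H.abs_ip_le_snorm[OF h(1) kfun_in_rkhs[OF L_X]])
  moreover have "H.snorm (kfun K (vec_fam w L)) = sqrt (kip K (vec_fam w L) (vec_fam w L))"
    using kip_self_nonneg[OF L_X] by (simp add: H.snorm_def rkhs_ip_kfun[OF L_X L_X])
  ultimately show ?thesis by simp
qed

lemma abs_inner_le_if_dq_fam_bound: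
  assumes x: "x \<in> X" and h: "h \<in> rkhs X K" and orth: "rkhs_ip h (dK_dir x (y - x) w) = 0"
    and seg: "\<And>\<tau>. 0 < \<tau> \<Longrightarrow> \<tau> \<le> 1 \<Longrightarrow> x + \<tau> *\<^sub>R (y - x) \<in> X"
    and bound: "\<And>\<tau>. 0 < \<tau> \<Longrightarrow> \<tau> \<le> 1 \<Longrightarrow> \<bar>h y \<bullet> w - rkhs_ip h (kfun K (dq_fam x (y - x) w \<tau>))\<bar> \<le> B"
  shows "\<bar>h y \<bullet> w\<bar> \<le> B"
proof -
  define t where "t k = inverse (real (Suc k))" for k
  have t: "\<And>k. t k > 0" "\<And>k. t k \<le> 1" by (simp_all add: t_def inverse_le_1_iff)
  have t0: "t \<longlonglongrightarrow> 0" unfolding t_def by (rule LIMSEQ_inverse_real_of_nat)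
  have "(\<lambda>k. rkhs_ip h (kfun K (dq_fam x (y - x) w (t k)))) \<longlonglongrightarrow> 0"
    using rkhs_ip_tendsto_approximates[OF approximates_dK_dir[of x t "y - x" w, OF x t(1) t0] h] orth seg t
    by simp
  then have "(\<lambda>k. \<bar>h y \<bullet> w - rkhs_ip h (kfun K (dq_fam x (y - x) w (t k)))\<bar>) \<longlonglongrightarrow> \<bar>h y \<bullet> w - 0\<bar>"
    by (intro tendsto_rabs tendsto_diff tendsto_const)
  then have "\<bar>h y \<bullet> w - 0\<bar> \<le> B" using bound t by (intro LIMSEQ_le_const2) auto
  then show ?thesis by simp
qed

lemma rkhs_component_bound:
  assumes x: "x \<in> X" and h: "h \<in> rkhs X K" "h x = 0"
    and orth: "\<And>v. rkhs_ip h (dK_dir x v w) = 0" and e: "e > 0"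
  obtains \<delta> where "\<delta> > 0" "\<And>y. y \<in> ball x \<delta> \<Longrightarrow> \<bar>h y \<bullet> w\<bar> \<le> e * norm (y - x)"
proof -
  define M where "M = H.snorm h"
  have "M \<ge> 0" by (simp add: M_def H.snorm_nonneg)
  define r where "r = e / (2 * (M + 1))"
  have "r > 0" using e \<open>M \<ge> 0\<close> by (simp add: r_def add_nonneg_pos)
  have "M + 1 > 0" using \<open>M \<ge> 0\<close> by linarith
  then have "M * (r * 2) = M / (M + 1) * e" by (simp add: r_def field_simps)
  also have "\<dots> \<le> e" using e \<open>M \<ge> 0\<close> by (intro mult_left_le_one_le) auto
  finally have coeff: "M * (r * 2) \<le> e" .
  obtain \<delta> where \<delta>: "\<delta> > 0" "ball x \<delta> \<subseteq> X"
    and bound: "\<And>L. vanishing_moments x L \<Longrightarrow> \<forall>(a,c)\<in>set L. a \<in> ball x \<delta> \<Longrightarrow>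
       kip K (vec_fam w L) (vec_fam w L) \<le> r^2 * (abs_moment x L)^2"
    using kip_vec_fam_bound[OF x zero_less_power[OF \<open>r > 0\<close>, of 2], where w = w] by blast
  have "\<bar>h y \<bullet> w\<bar> \<le> M * (r * 2) * norm (y - x)" if y: "y \<in> ball x \<delta>" for y
  proof (rule abs_inner_le_if_dq_fam_bound[OF x h(1) orth])
    have seg: "x + \<tau> *\<^sub>R (y - x) \<in> ball x \<delta>" if "0 < \<tau>" "\<tau> \<le> 1" for \<tau>
      using y that mult_left_le_one_le[of "norm (y - x)" \<tau>] by (simp add: dist_norm norm_minus_commute)
    with \<delta>(2) show "x + \<tau> *\<^sub>R (y - x) \<in> X" if "0 < \<tau>" "\<tau> \<le> 1" for \<tau> using that by blast
    fix \<tau> :: real assume \<tau>: "0 < \<tau>" "\<tau> \<le> 1"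
    define L where "L = [(y, 1), (x, -1), (x + \<tau> *\<^sub>R (y - x), -(1 / \<tau>)), (x, 1 / \<tau>)]"
    have "kip K (vec_fam w L) (vec_fam w L) \<le> r^2 * (2 * norm (y - x))^2"
      using bound[of L] \<tau> seg[OF \<tau>] y \<delta>(1) by (simp add: L_def vanishing_moments_def abs_moment_def)
    then have sqrt_le: "sqrt (kip K (vec_fam w L) (vec_fam w L)) \<le> r * (2 * norm (y - x))"
      using \<open>r > 0\<close> real_sqrt_le_mono by (fastforce simp: real_sqrt_mult)
    have "\<bar>h y \<bullet> w - rkhs_ip h (kfun K (dq_fam x (y - x) w \<tau>))\<bar> \<le> M * sqrt (kip K (vec_fam w L) (vec_fam w L))"
      unfolding L_def M_def using y seg[OF \<tau>] \<delta>(2) by (intro abs_inner_sub_rkhs_ip_dq_fam_le[OF h x]) auto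
    also have "\<dots> \<le> M * (r * 2) * norm (y - x)"
      using mult_left_mono[OF sqrt_le \<open>M \<ge> 0\<close>] by (simp add: ac_simps)
    finally show "\<bar>h y \<bullet> w - rkhs_ip h (kfun K (dq_fam x (y - x) w \<tau>))\<bar> \<le> M * (r * 2) * norm (y - x)" .
  qed
  with \<delta>(1) coeff show ?thesis by (meson order_trans mult_right_mono norm_ge_zero that)
qed

lemma rkhs_has_derivative_zero_if_orthogonal:
  assumes x: "x \<in> X" and h: "h \<in> rkhs X K" "h x = 0"
    and orth: "\<And>p q. rkhs_ip h (dK K p x (axis q 1)) = 0"
  shows "(h has_derivative (\<lambda>_. 0)) (at x)"
  unfolding has_derivative_at_alt
proof (intro conjI allI impI bounded_linear_zero)
  fix e :: real assume "e > 0"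
  define n where "n = real CARD('n)"
  have "n > 0" by (simp add: n_def)
  have "\<exists>\<delta>>0. \<forall>y\<in>ball x \<delta>. \<bar>h y \<bullet> axis q 1\<bar> \<le> e / n * norm (y - x)" for q
  proof -
    have "\<And>v. rkhs_ip h (dK_dir x v (axis q 1)) = 0"
      using orth by (intro rkhs_ip_dK_dir_eq_0[OF x h(1)])
    moreover have "e / n > 0" using \<open>e > 0\<close> \<open>n > 0\<close> by simp
    ultimately obtain \<delta> where "\<delta> > 0" "\<And>y. y \<in> ball x \<delta> \<Longrightarrow> \<bar>h y \<bullet> axis q 1\<bar> \<le> e / n * norm (y - x)"
      using rkhs_component_bound[OF x h] by blast
    then show ?thesis by blast
  qed
  then obtain \<delta>q where \<delta>q: "\<And>q. \<delta>q q > 0"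
    and comp: "\<And>q y. y \<in> ball x (\<delta>q q) \<Longrightarrow> \<bar>h y \<bullet> axis q 1\<bar> \<le> e / n * norm (y - x)"
    by metis
  define \<delta> where "\<delta> = Min (range \<delta>q)"
  have "\<delta> > 0" "\<And>q. \<delta> \<le> \<delta>q q" using \<delta>q by (simp_all add: \<delta>_def)
  have "norm (h y - h x - 0) \<le> e * norm (y - x)" if y: "norm (y - x) < \<delta>" for y
  proof -
    have "norm (h y - h x - 0) \<le> (\<Sum>q\<in>UNIV. \<bar>h y $ q\<bar>)"
      using h(2) by (simp add: norm_le_l1_cart)
    also have "\<dots> \<le> (\<Sum>q\<in>(UNIV::'n set). e / n * norm (y - x))"
    proof (rule sum_mono)
      fix q
      have "y \<in> ball x (\<delta>q q)" using y \<open>\<delta> \<le> \<delta>q q\<close> by (simp add: dist_norm norm_minus_commute)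
      then show "\<bar>h y $ q\<bar> \<le> e / n * norm (y - x)" using comp by (simp add: inner_axis)
    qed
    also have "\<dots> = e * norm (y - x)" using \<open>n > 0\<close> by (simp add: n_def)
    finally show ?thesis .
  qed
  with \<open>\<delta> > 0\<close> show "\<exists>d>0. \<forall>y. norm (y - x) < d \<longrightarrow> norm (h y - h x - 0) \<le> e * norm (y - x)"
    by blast
qed

end

section \<open>The representer theorem\<close>

definition jet_index :: "(real^'n) set \<Rightarrow> (((real^'n) \<times> 'n) + ((real^'n) \<times> 'n \<times> 'n)) set" where
  "jet_index Xc = (Xc \<times> UNIV) <+> (Xc \<times> UNIV)"

definition jet_basis :: "'n kernel \<Rightarrow> ((real^'n) \<times> 'n) + ((real^'n) \<times> 'n \<times> 'n) \<Rightarrow> real^'n \<Rightarrow> real^'n" where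
  "jet_basis K = case_sum (\<lambda>(x,q). kfun K [(x, axis q 1)]) (\<lambda>(x,p,q). dK K p x (axis q 1))"

lemma matrix_vector_mult_sum_scaleR:
  "(A :: real^'n^'m) *v (\<Sum>q\<in>S. c q *\<^sub>R y q) = (\<Sum>q\<in>S. c q *\<^sub>R (A *v y q))"
proof -
  have "linear (\<lambda>v. A *v v)" by simp
  then show ?thesis by (simp add: linear_sum linear_scale)
qed

lemma dK_sum_scaleR: "dK K p x (\<Sum>q\<in>S. c q *\<^sub>R y q) z = (\<Sum>q\<in>S. c q *\<^sub>R dK K p x (y q) z)"
  by (simp add: dK_def matrix_vector_mult_sum_scaleR)

lemma Vspace_if_eq_jet_basis_sum:
  assumes Xc: "finite Xc" and f: "\<And>z. z \<in> X \<Longrightarrow> f z = (\<Sum>j\<in>jet_index Xc. c j *\<^sub>R jet_basis K j z)"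
  shows "f \<in> Vspace X K Xc"
proof -
  define a where "a x = (\<Sum>q\<in>UNIV. c (Inl (x,q)) *\<^sub>R axis q (1::real))" for x
  define a' where "a' x p = (\<Sum>q\<in>UNIV. c (Inr (x,p,q)) *\<^sub>R axis q (1::real))" for x p
  have "(\<Sum>j\<in>jet_index Xc. c j *\<^sub>R jet_basis K j z)
      = (\<Sum>x\<in>Xc. K z x *v a x) + (\<Sum>x\<in>Xc. \<Sum>p\<in>UNIV. dK K p x (a' x p) z)" for z
  proof -
    have "(\<Sum>j\<in>jet_index Xc. c j *\<^sub>R jet_basis K j z)
        = (\<Sum>x\<in>Xc. \<Sum>q\<in>UNIV. c (Inl (x,q)) *\<^sub>R (K z x *v axis q 1))
          + (\<Sum>x\<in>Xc. \<Sum>p\<in>UNIV. \<Sum>q\<in>UNIV. c (Inr (x,p,q)) *\<^sub>R dK K p x (axis q 1) z)"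
      using Xc by (simp add: jet_index_def jet_basis_def sum.Plus sum.cartesian_product sum_fun_apply
          comp_def split_def)
    also have "\<dots> = (\<Sum>x\<in>Xc. K z x *v a x) + (\<Sum>x\<in>Xc. \<Sum>p\<in>UNIV. dK K p x (a' x p) z)"
      by (simp add: a_def a'_def matrix_vector_mult_sum_scaleR dK_sum_scaleR)
    finally show ?thesis .
  qed
  with f show ?thesis
    unfolding Vspace_def by (intro CollectI exI[of _ a] exI[of _ a'] ballI) simp
qed

context C2_kernel_space
begin

lemma jet_eq_if_orthogonal:
  assumes x: "x \<in> X" and f: "f \<in> rkhs X K" and g: "g \<in> rkhs X K"
    and orth0: "\<And>q. rkhs_ip (f - g) (kfun K [(x, axis q 1)]) = 0"
    and orth1: "\<And>p q. rkhs_ip (f - g) (dK K p x (axis q 1)) = 0"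
  shows "g x = f x" "frechet_derivative g (at x) = frechet_derivative f (at x)"
proof -
  have fg: "f - g \<in> rkhs X K" using f g by (rule H.mem_diff)
  have "(f - g) x \<bullet> axis q 1 = 0" for q
    using orth0[of q] rkhs_reproducing[OF fg x] by simp
  then have "(f - g) x = 0" by (simp add: inner_axis vec_eq_iff)
  then show "g x = f x" by simp
  have "((f - g) has_derivative (\<lambda>_. 0)) (at x)"
    using x fg \<open>(f - g) x = 0\<close> orth1 by (rule rkhs_has_derivative_zero_if_orthogonal)
  then have "(f has_derivative D') (at x) \<longleftrightarrow> (g has_derivative D') (at x)" for D'
    using has_derivative_add[of g _ _ "f - g" "\<lambda>_. 0"] has_derivative_diff[of f _ _ "f - g" "\<lambda>_. 0"]
    by (auto simp: fun_diff_def)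
  then show "frechet_derivative g (at x) = frechet_derivative f (at x)"
    by (simp add: frechet_derivative_def)
qed

lemma Vspace_if_min_norm_jet:
  assumes Xc: "finite Xc" "Xc \<subseteq> X" and f: "f \<in> rkhs X K"
    and min: "\<And>g. g \<in> rkhs X K \<Longrightarrow>
       \<forall>x\<in>Xc. g x = f x \<and> frechet_derivative g (at x) = frechet_derivative f (at x) \<Longrightarrow>
       rkhs_ip f f \<le> rkhs_ip g g"
  shows "f \<in> Vspace X K Xc"
proof -
  have I: "finite (jet_index Xc)" using Xc(1) by (simp add: jet_index_def)
  have r: "jet_basis K i \<in> rkhs X K" if "i \<in> jet_index Xc" for i
    using that Xc(2) by (auto simp: jet_index_def jet_basis_def subset_iff intro!: kfun_in_rkhs dK_in_rkhs)
  have "rkhs_ip f f \<le> rkhs_ip g g"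
    if g: "g \<in> rkhs X K" and orth: "\<forall>i\<in>jet_index Xc. rkhs_ip (f - g) (jet_basis K i) = 0" for g
  proof (rule min[OF g], intro ballI conjI)
    fix x assume "x \<in> Xc"
    have "rkhs_ip (f - g) (kfun K [(x, axis q 1)]) = 0" for q
    proof -
      have "Inl (x,q) \<in> jet_index Xc" using \<open>x \<in> Xc\<close> unfolding jet_index_def by (intro InlI) simp
      with orth show ?thesis by (auto simp: jet_basis_def)
    qed
    moreover have "rkhs_ip (f - g) (dK K p x (axis q 1)) = 0" for p q
    proof -
      have "Inr (x,p,q) \<in> jet_index Xc" using \<open>x \<in> Xc\<close> unfolding jet_index_def by (intro InrI) simp
      with orth show ?thesis by (auto simp: jet_basis_def)
    qed
    moreover have "x \<in> X" using \<open>x \<in> Xc\<close> Xc(2) by blast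
    ultimately show "g x = f x" "frechet_derivative g (at x) = frechet_derivative f (at x)"
      using jet_eq_if_orthogonal[OF _ f g] by blast+
  qed
  then obtain c where "\<And>z. z \<in> X \<Longrightarrow> f z = (\<Sum>j\<in>jet_index Xc. c j *\<^sub>R jet_basis K j z)"
    using rkhs_min_norm_in_span[of "jet_index Xc" "jet_basis K" f, OF I r f] by blast
  with Xc(1) show ?thesis by (rule Vspace_if_eq_jet_basis_sum)
qed

end

lemma F_lambda_cong:
  "f x = g x \<Longrightarrow> frechet_derivative f (at x) = frechet_derivative g (at x) \<Longrightarrow>
    F_lambda k lam x f W = F_lambda k lam x g W"
  by (simp add: F_lambda_def dir_deriv_mat_def jacobian_def)

lemma J_d_update_f:
  assumes "\<forall>i<N. g (xs i) = f (xs i)"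
  shows "J_d N xs us xds muf mub X Kf KB g b
    = J_d N xs us xds muf mub X Kf KB f b + muf * (rkhs_norm2 X Kf g - rkhs_norm2 X Kf f)"
  using assms by (simp add: J_d_def algebra_simps)

lemma J_d_update_b:
  assumes "\<forall>i<N. g (xs i) = b j (xs i)"
  shows "J_d N xs us xds muf mub X Kf KB f (b(j := g))
    = J_d N xs us xds muf mub X Kf KB f b + mub * (rkhs_norm2 X KB g - rkhs_norm2 X KB (b j))"
proof -
  have "(\<Sum>i<N. (norm (f (xs i) + (\<Sum>j'\<in>UNIV. (us i $ j') *\<^sub>R (b(j := g)) j' (xs i)) - xds i))\<^sup>2)
      = (\<Sum>i<N. (norm (f (xs i) + (\<Sum>j'\<in>UNIV. (us i $ j') *\<^sub>R b j' (xs i)) - xds i))\<^sup>2)"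
  proof (intro sum.cong refl)
    fix i assume "i \<in> {..<N}"
    then have "(b(j := g)) j' (xs i) = b j' (xs i)" for j' using assms by simp
    then show "(norm (f (xs i) + (\<Sum>j'\<in>UNIV. (us i $ j') *\<^sub>R (b(j := g)) j' (xs i)) - xds i))\<^sup>2
        = (norm (f (xs i) + (\<Sum>j'\<in>UNIV. (us i $ j') *\<^sub>R b j' (xs i)) - xds i))\<^sup>2"
      by (simp only:)
  qed
  moreover have "(\<Sum>j'\<in>UNIV. rkhs_norm2 X KB ((b(j := g)) j'))
      = (\<Sum>j'\<in>UNIV. rkhs_norm2 X KB (b j')) + (rkhs_norm2 X KB g - rkhs_norm2 X KB (b j))"
    by (simp add: sum.remove[of UNIV j])
  ultimately show ?thesis by (simp only: J_d_def) (simp add: algebra_simps)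
qed

theorem theorem3:
  fixes X :: "(real, 'n::{finite,linorder}) vec set"
    and Xc :: "((real, 'n) vec) set"
    and N :: nat
    and xs :: "nat \<Rightarrow> (real, 'n) vec" and us :: "nat \<Rightarrow> (real, 'm::finite) vec" and xds :: "nat \<Rightarrow> (real, 'n) vec"
    and Kf KB :: "'n kernel"
    and lam muf mub :: real
    and W :: "(real, 'n) vec \<Rightarrow> ((real, 'n) vec, 'n) vec"
    and fstar :: "(real, 'n) vec \<Rightarrow> (real, 'n) vec" and bstar :: "'m \<Rightarrow> (real, 'n) vec \<Rightarrow> (real, 'n) vec"
  assumes X: "open X" "connected X" "bounded X"
    and m_lt_n: "CARD('m) < CARD('n)"
    and data: "\<forall>i<N. xs i \<in> X"
    and Xc: "finite Xc" "Xc \<subseteq> X" "\<forall>i<N. xs i \<in> Xc"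
    and Kf: "pd_kernel X Kf" "C2_kernel X Kf"
    and KB: "pd_kernel X KB" "C2_kernel X KB"
    and KB_struct: "\<forall>g\<in>rkhs X KB. \<forall>x\<in>X. \<forall>j. first_coord (CARD('n) - CARD('m)) j \<longrightarrow> g x $ j = 0"
    and params: "lam > 0" "muf > 0" "mub > 0"
    and W: "W differentiable_on X" "\<forall>x\<in>X. transpose (W x) = W x"
    and feasible_nonempty: "\<exists>f\<in>rkhs X Kf.
           \<forall>x\<in>Xc. loewner_le (F_lambda (CARD('n) - CARD('m)) lam x f W) 0"
    and opt_mem: "fstar \<in> rkhs X Kf" "\<forall>j. bstar j \<in> rkhs X KB"
    and opt_feas: "\<forall>x\<in>Xc. loewner_le (F_lambda (CARD('n) - CARD('m)) lam x fstar W) 0"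
    and opt_min: "\<forall>f b. f \<in> rkhs X Kf \<longrightarrow> (\<forall>j. b j \<in> rkhs X KB) \<longrightarrow>
           (\<forall>x\<in>Xc. loewner_le (F_lambda (CARD('n) - CARD('m)) lam x f W) 0) \<longrightarrow>
           J_d N xs us xds muf mub X Kf KB fstar bstar \<le> J_d N xs us xds muf mub X Kf KB f b"
  shows "fstar \<in> Vspace X Kf Xc \<and> (\<forall>j. bstar j \<in> Vspace X KB Xc)"
proof -
  obtain Df D2f DB D2B where "C2_kernel_space X Kf Df D2f" "C2_kernel_space X KB DB D2B"
    using C2_kernel_spaceE[OF Kf X(1)] C2_kernel_spaceE[OF KB X(1)] by metis
  then interpret F: C2_kernel_space X Kf Df D2f + B: C2_kernel_space X KB DB D2B .
  have "fstar \<in> Vspace X Kf Xc"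
  proof (rule F.Vspace_if_min_norm_jet[OF Xc(1,2) opt_mem(1)])
    fix g assume g: "g \<in> rkhs X Kf"
      and jet: "\<forall>x\<in>Xc. g x = fstar x \<and> frechet_derivative g (at x) = frechet_derivative fstar (at x)"
    then have "J_d N xs us xds muf mub X Kf KB fstar bstar \<le> J_d N xs us xds muf mub X Kf KB g bstar"
      using opt_min opt_mem(2) opt_feas F_lambda_cong[of g] by simp
    also have "\<dots> = J_d N xs us xds muf mub X Kf KB fstar bstar + muf * (rkhs_norm2 X Kf g - rkhs_norm2 X Kf fstar)"
      using jet Xc(3) by (intro J_d_update_f) auto
    finally show "F.rkhs_ip fstar fstar \<le> F.rkhs_ip g g"
      using params(2) g opt_mem(1) by (simp add: F.rkhs_norm2_eq zero_le_mult_iff)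
  qed
  moreover have "bstar j \<in> Vspace X KB Xc" for j
  proof (rule B.Vspace_if_min_norm_jet[OF Xc(1,2)])
    show "bstar j \<in> rkhs X KB" using opt_mem(2) by blast
    fix g assume g: "g \<in> rkhs X KB"
      and jet: "\<forall>x\<in>Xc. g x = bstar j x \<and> frechet_derivative g (at x) = frechet_derivative (bstar j) (at x)"
    then have "J_d N xs us xds muf mub X Kf KB fstar bstar \<le> J_d N xs us xds muf mub X Kf KB fstar (bstar(j := g))"
      using opt_min opt_mem opt_feas by simp
    also have "\<dots> = J_d N xs us xds muf mub X Kf KB fstar bstar + mub * (rkhs_norm2 X KB g - rkhs_norm2 X KB (bstar j))"
      using jet Xc(3) by (intro J_d_update_b) auto
    finally show "B.rkhs_ip (bstar j) (bstar j) \<le> B.rkhs_ip g g"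
      using params(3) g opt_mem(2) by (simp add: B.rkhs_norm2_eq zero_le_mult_iff)
  qed
  ultimately show ?thesis by blast
qed

end
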